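(* With $H_t$ the auxiliary process defined below, for all $(x_t,x_{t-1})\in\mathbb{R}^d\times\mathbb{R}^d$, $$\log\frac{p_{X_{t-1}|X_t}(x_{t-1}|x_t)}{p_{H_{t-1}|H_t}(x_{t-1}|x_t)}\le T^{c_0+2c_R+2}\Big\{\|x_{t-1}-x_t/\sqrt{\alpha_t}\|_2^2+\|x_t\|_2^2+1\Big\}.$$
   Context: $T$ large; $X_0$ continuous in $\mathbb{R}^d$ with $\|X_0\|_2\le T^{c_R}$ a.s.; learning rates $\beta_1=1-\alpha_1=T^{-c_0}$, $\beta_t=1-\alpha_t=\frac{c_1\log T}{T}\min\{\beta_1(1+\frac{c_1\log T}{T})^t,1\}$ for $t>1$, $c_0,c_1$ large constants, $\overline\alpha_t=\prod_{k\le t}\alpha_k$; forward process $X_t=\sqrt{\alpha_t}X_{t-1}+\sqrt{1-\alpha_t}W_t$ with i.i.d. $W_t\sim\mathcal N(0,I_d)$; $s_t^\star=\nabla\log p_{X_t}$; $\widehat\mu_t^\star(x)=\frac{1}{\sqrt{\alpha_t}}(x+(1-\alpha_t)s_t^\star(x))$; $g_t(x)=-(1-\overline\alpha_t)s_t^\star(x)$, $J_t(x)=\partial g_t(x)/\partial x$. Auxiliary process: $H_T\sim\mathcal N(0,I_d)$, $H_{t-1}=\widehat\mu_t^\star(H_t)+\sqrt{\frac{1-\alpha_t}{2\alpha_t}}(Z_t-\frac{1-\alpha_t}{1-\overline\alpha_t}J_t(H_t)Z_t+Z_t^+)$ with $Z_t,Z_t^+$ i.i.d. $\mathcal N(0,I_d)$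 independent of everything else. *)

theory Defs
  imports "HOL-Analysis.Analysis" "HOL-Probability.Probability"
begin

definition gauss_pdf :: "real^'n \<Rightarrow> real^'n^'n \<Rightarrow> real^'n \<Rightarrow> real" where
  "gauss_pdf mu S y =
     (2 * pi) powr (- real CARD('n) / 2) * det S powr (-1/2)
     * exp (- (1/2) * ((y - mu) \<bullet> (matrix_inv S *v (y - mu))))"

definition lr_beta :: "nat \<Rightarrow> real \<Rightarrow> real \<Rightarrow> nat \<Rightarrow> real" where
  "lr_beta T c0 c1 t =
     (if t \<le> 1 then real T powr (- c0)
      else (c1 * ln (real T) / real T)
           * min (real T powr (- c0) * (1 + c1 * ln (real T) / real T) ^ t) 1)"

definition lr_alpha :: "nat \<Rightarrow> real \<Rightarrow> real \<Rightarrow> nat \<Rightarrow> real" where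
  "lr_alpha T c0 c1 t = 1 - lr_beta T c0 c1 t"

definition lr_alphabar :: "nat \<Rightarrow> real \<Rightarrow> real \<Rightarrow> nat \<Rightarrow> real" where
  "lr_alphabar T c0 c1 t = (\<Prod>k\<in>{1..t}. lr_alpha T c0 c1 k)"

text \<open>Density of X_t (t >= 1) when X_0 has law M:
  X_t = sqrt(alphabar_t) X_0 + sqrt(1 - alphabar_t) Wbar, Wbar ~ N(0, I).\<close>
definition pX :: "nat \<Rightarrow> real \<Rightarrow> real \<Rightarrow> (real^'n) measure \<Rightarrow> nat \<Rightarrow> real^'n \<Rightarrow> real" where
  "pX T c0 c1 M t x =
     (LINT y|M. gauss_pdf (sqrt (lr_alphabar T c0 c1 t) *\<^sub>R y)
                          ((1 - lr_alphabar T c0 c1 t) *\<^sub>R mat 1) x)"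

text \<open>Conditional density p_{X_{t-1}|X_t}(xprev | xt) (Bayes), for t >= 2.\<close>
definition condX :: "nat \<Rightarrow> real \<Rightarrow> real \<Rightarrow> (real^'n) measure \<Rightarrow> nat \<Rightarrow> real^'n \<Rightarrow> real^'n \<Rightarrow> real" where
  "condX T c0 c1 M t xprev xt =
     pX T c0 c1 M (t - 1) xprev
     * gauss_pdf (sqrt (lr_alpha T c0 c1 t) *\<^sub>R xprev) ((1 - lr_alpha T c0 c1 t) *\<^sub>R mat 1) xt
     / pX T c0 c1 M t xt"

definition score :: "nat \<Rightarrow> real \<Rightarrow> real \<Rightarrow> (real^'n) measure \<Rightarrow> nat \<Rightarrow> real^'n \<Rightarrow> real^'n" where
  "score T c0 c1 M t x =
     (\<chi> i. frechet_derivative (\<lambda>z. ln (pX T c0 c1 M t z)) (at x) (axis i 1))"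

definition gfun :: "nat \<Rightarrow> real \<Rightarrow> real \<Rightarrow> (real^'n) measure \<Rightarrow> nat \<Rightarrow> real^'n \<Rightarrow> real^'n" where
  "gfun T c0 c1 M t x = (- (1 - lr_alphabar T c0 c1 t)) *\<^sub>R score T c0 c1 M t x"

definition Jac :: "nat \<Rightarrow> real \<Rightarrow> real \<Rightarrow> (real^'n) measure \<Rightarrow> nat \<Rightarrow> real^'n \<Rightarrow> real^'n^'n" where
  "Jac T c0 c1 M t x = matrix (frechet_derivative (gfun T c0 c1 M t) (at x))"

definition muhat :: "nat \<Rightarrow> real \<Rightarrow> real \<Rightarrow> (real^'n) measure \<Rightarrow> nat \<Rightarrow> real^'n \<Rightarrow> real^'n" where
  "muhat T c0 c1 M t x =
     (1 / sqrt (lr_alpha T c0 c1 t)) *\<^sub>R (x + (1 - lr_alpha T c0 c1 t) *\<^sub>R score T c0 c1 M t x)"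

definition SigmaH :: "nat \<Rightarrow> real \<Rightarrow> real \<Rightarrow> (real^'n) measure \<Rightarrow> nat \<Rightarrow> real^'n \<Rightarrow> real^'n^'n" where
  "SigmaH T c0 c1 M t x =
     (let c = (1 - lr_alpha T c0 c1 t) / (1 - lr_alphabar T c0 c1 t);
          A = mat 1 - c *\<^sub>R Jac T c0 c1 M t x
      in ((1 - lr_alpha T c0 c1 t) / (2 * lr_alpha T c0 c1 t)) *\<^sub>R (A ** transpose A + mat 1))"

text \<open>Conditional density p_{H_{t-1}|H_t}(xprev | xt).\<close>
definition condH :: "nat \<Rightarrow> real \<Rightarrow> real \<Rightarrow> (real^'n) measure \<Rightarrow> nat \<Rightarrow> real^'n \<Rightarrow> real^'n \<Rightarrow> real" where
  "condH T c0 c1 M t xprev xt =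
     gauss_pdf (muhat T c0 c1 M t xt) (SigmaH T c0 c1 M t xt) xprev"

end

theory Submission
  imports Defs
begin

text \<open>
  By Bayes' rule the reverse kernel of \<open>X\<close> is \<open>p_{t-1}(x') N(x; \<surd>\<alpha>_t x', \<beta>_t I) / p_t(x)\<close>,
  and every marginal \<open>p_k\<close> is a Gaussian mixture of variance \<open>\<sigma>_k = 1 - \<alpha>_1\<cdots>\<alpha>_k \<ge> T^-c0\<close>
  whose centres lie in the ball of radius \<open>R = T^cR\<close>. Such a mixture lies between its
  normalising constant times \<open>exp (-(|x| + R)^2 / 2\<sigma>_k)\<close> and that constant, and differentiating
  twice under the integral sign bounds the score by \<open>d (|x| + R) / \<sigma>_k\<close> and the entries of
  \<open>J_t\<close> by \<open>2 (|x| + R)^2 / \<sigma>_k + 1\<close>. The auxiliary kernel is Gaussian with covariance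
  \<open>\<Sigma> = \<beta>_t / (2\<alpha>_t) (A A^T + I) \<ge> \<beta>_t / (2\<alpha>_t) I\<close>, which bounds its quadratic form, while
  the entry bounds on \<open>A\<close> bound \<open>det \<Sigma>\<close>. Collecting logarithms, the log-ratio is at most
  \<open>2 T^(c0+1) |x' - x/\<surd>\<alpha>_t|^2\<close> plus \<open>T^(c0+2cR) (|x|^2 + 1)\<close> times a linear polynomial in
  \<open>T\<close> whose coefficients depend only on \<open>d\<close> and \<open>c0\<close>; for large \<open>T\<close> the factor \<open>T^2\<close> in the
  claimed bound absorbs that polynomial.
\<close>

subsection \<open>Isotropic Gaussian densities\<close>

lemma det_scaleR_mat_1: "det ((s::real) *\<^sub>R (mat 1 :: real^'n^'n)) = s ^ CARD('n)"
  by (subst det_diagonal) (auto simp: mat_def)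

lemma matrix_inv_scaleR_mat_1:
  assumes "(s::real) \<noteq> 0"
  shows "matrix_inv (s *\<^sub>R (mat 1 :: real^'n^'n)) = (1/s) *\<^sub>R mat 1"
proof -
  let ?S = "s *\<^sub>R (mat 1 :: real^'n^'n)"
  have "\<exists>A'. ?S ** A' = mat 1 \<and> A' ** ?S = mat 1"
    by (rule exI[of _ "(1/s) *\<^sub>R mat 1"]) (simp add: assms matrix_scalar_ac)
  then have "?S ** matrix_inv ?S = mat 1"
    unfolding matrix_inv_def by (rule someI2_ex) blast
  then have "s *\<^sub>R matrix_inv ?S = mat 1"
    by (simp add: flip: scalar_matrix_assoc)
  then have "(1/s) *\<^sub>R (s *\<^sub>R matrix_inv ?S) = (1/s) *\<^sub>R mat 1" by simp
  then show ?thesis using assms by simp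
qed

definition gauss_const :: "nat \<Rightarrow> real \<Rightarrow> real" where
  "gauss_const d s = (2 * pi) powr (- real d / 2) * (s ^ d) powr (-1/2)"

lemma gauss_const_pos: "s > 0 \<Longrightarrow> gauss_const d s > 0"
  by (simp add: gauss_const_def)

lemma ln_gauss_const:
  "s > 0 \<Longrightarrow> ln (gauss_const d s) = - (real d / 2) * ln (2 * pi) - (real d / 2) * ln s"
  by (simp add: gauss_const_def ln_mult ln_powr ln_realpow)

lemma ln_gauss_const_le: "s > 0 \<Longrightarrow> ln (gauss_const d s) \<le> - (real d / 2) * ln s"
proof -
  assume "s > 0"
  moreover have "0 \<le> ln (2 * pi)" using pi_gt3 by (intro ln_ge_zero) simp
  ultimately show ?thesis by (simp add: ln_gauss_const)
qed

lemma gauss_pdf_scaleR_mat_1: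
  assumes "(s::real) > 0"
  shows "gauss_pdf mu (s *\<^sub>R (mat 1 :: real^'n^'n)) x =
    gauss_const CARD('n) s * exp (- ((x - mu) \<bullet> (x - mu)) / (2 * s))"
proof -
  have "((1/s) *\<^sub>R (mat 1 :: real^'n^'n)) *v (x - mu) = (1/s) *\<^sub>R (x - mu)"
    by (simp add: vec_eq_iff matrix_vector_mult_def mat_def if_distrib if_distribR cong del: if_weak_cong)
  then show ?thesis
    using assms by (simp add: gauss_pdf_def gauss_const_def det_scaleR_mat_1 matrix_inv_scaleR_mat_1)
qed

lemma ln_gauss_pdf_scaleR_mat_1_le:
  assumes "(s::real) > 0"
  shows "ln (gauss_pdf mu (s *\<^sub>R (mat 1 :: real^'n^'n)) x) \<le> - (real CARD('n) / 2) * ln s"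
proof -
  have "ln (gauss_pdf mu (s *\<^sub>R (mat 1 :: real^'n^'n)) x)
      = ln (gauss_const CARD('n) s) - ((x - mu) \<bullet> (x - mu)) / (2 * s)"
    using assms gauss_const_pos[OF assms, of "CARD('n)"] by (simp add: gauss_pdf_scaleR_mat_1 ln_mult)
  also have "\<dots> \<le> ln (gauss_const CARD('n) s)"
    using assms by simp
  also have "\<dots> \<le> - (real CARD('n) / 2) * ln s"
    using assms by (rule ln_gauss_const_le)
  finally show ?thesis .
qed

subsection \<open>Differentiation under the integral sign\<close>

lemma lipschitz_on_cball_of_derivative_bound:
  fixes f :: "'a::{real_normed_vector, perfect_space} \<Rightarrow> 'b::real_normed_vector"
  assumes "\<And>z. (f has_derivative f' z) (at z)"
    and "\<And>z h. norm (z - x0) \<le> r \<Longrightarrow> norm (f' z h) \<le> B * norm h"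
    and "norm (z - x0) \<le> r" "norm (w - x0) \<le> r"
  shows "norm (f z - f w) \<le> B * norm (z - w)"
proof (rule differentiable_bound[where S="cball x0 r" and f'=f'])
  show "(f has_derivative f' x) (at x within cball x0 r)" for x
    using assms(1) by (rule has_derivative_at_withinI)
  show "onorm (f' x) \<le> B" if "x \<in> cball x0 r" for x
    by (rule onorm_le) (use assms(2) that in \<open>auto simp: dist_norm norm_minus_commute\<close>)
qed (use assms(3,4) in \<open>auto simp: dist_norm norm_minus_commute\<close>)

lemma first_order_remainder_le:
  fixes f :: "'a::{real_inner, perfect_space} \<Rightarrow> real" and G :: "'a \<Rightarrow> 'a"
  assumes der: "\<And>z. (f has_derivative (\<lambda>h. h \<bullet> G z)) (at z)"
    and lip: "\<And>z. norm (z - x0) \<le> norm h \<Longrightarrow> norm (G z - G x0) \<le> L * norm (z - x0)"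
    and L: "L \<ge> 0"
  shows "\<bar>f (x0 + h) - f x0 - h \<bullet> G x0\<bar> \<le> L * (norm h)^2"
proof -
  let ?F = "\<lambda>z. f z - z \<bullet> G x0"
  have "(?F has_derivative (\<lambda>k. k \<bullet> (G z - G x0))) (at z)" for z
  proof -
    have "(?F has_derivative (\<lambda>k. k \<bullet> G z - k \<bullet> G x0)) (at z)"
      by (intro derivative_intros der)
    then show ?thesis by (simp add: inner_diff_right)
  qed
  moreover have "norm (k \<bullet> (G z - G x0)) \<le> L * norm h * norm k"
    if "norm (z - x0) \<le> norm h" for z k
  proof -
    have "norm (k \<bullet> (G z - G x0)) \<le> norm k * norm (G z - G x0)"
      by (simp add: Cauchy_Schwarz_ineq2)
    also have "\<dots> \<le> norm k * (L * norm h)"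
      using that lip[OF that] L by (intro mult_left_mono) (auto intro: order_trans mult_left_mono)
    finally show ?thesis by (simp add: algebra_simps)
  qed
  ultimately have "norm (?F (x0 + h) - ?F x0) \<le> L * norm h * norm ((x0 + h) - x0)"
    by (intro lipschitz_on_cball_of_derivative_bound[of ?F _ x0 "norm h"]) auto
  then show ?thesis by (simp add: inner_add_left power2_eq_square algebra_simps)
qed

text \<open>The gradient is Lipschitz near \<open>x0\<close> uniformly in \<open>y\<close> on a set of full measure, so the
  first-order remainders are \<open>O(|h|\<^sup>2)\<close> uniformly and survive integration.\<close>

context
  fixes M :: "'b measure" and psi :: "'a::euclidean_space \<Rightarrow> 'b \<Rightarrow> real" and G :: "'a \<Rightarrow> 'b \<Rightarrow> 'a"
    and Sy :: "'b \<Rightarrow> bool" and x0 :: 'a and B L :: real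
  assumes M: "prob_space M"
    and AE: "AE y in M. Sy y"
    and meas: "\<And>x. psi x \<in> borel_measurable M" "\<And>x. G x \<in> borel_measurable M"
    and der: "\<And>y z. ((\<lambda>x. psi x y) has_derivative (\<lambda>h. h \<bullet> G z y)) (at z)"
    and bnd: "\<And>y z. Sy y \<Longrightarrow> norm (z - x0) \<le> 1 \<Longrightarrow> \<bar>psi z y\<bar> \<le> B \<and> norm (G z y) \<le> B"
    and lip: "\<And>y z w. Sy y \<Longrightarrow> norm (z - x0) \<le> 1 \<Longrightarrow> norm (w - x0) \<le> 1 \<Longrightarrow>
                 norm (G z y - G w y) \<le> L * norm (z - w)"
    and L: "L \<ge> 0"
begin

lemma integral_first_order_remainder_le:
  assumes h: "norm h \<le> 1"
  shows "\<bar>(\<integral>y. psi (x0 + h) y \<partial>M) - (\<integral>y. psi x0 y \<partial>M) - h \<bullet> (\<integral>y. G x0 y \<partial>M)\<bar> \<le> L * (norm h)^2"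
proof -
  interpret prob_space M by (rule M)
  have int_psi: "integrable M (psi z)" if "norm (z - x0) \<le> 1" for z
    by (rule integrable_const_bound[where B=B]) (use AE bnd that meas in \<open>auto elim: AE_mp\<close>)
  have int_G: "integrable M (G x0)"
    by (rule integrable_const_bound[where B=B]) (use AE bnd meas in \<open>auto elim: AE_mp\<close>)
  have rem: "\<bar>psi (x0 + h) y - psi x0 y - h \<bullet> G x0 y\<bar> \<le> L * (norm h)^2" if "Sy y" for y
    by (rule first_order_remainder_le[where f="\<lambda>x. psi x y" and G="\<lambda>z. G z y"])
       (use der lip[OF \<open>Sy y\<close>] h L in auto)
  have "\<bar>(\<integral>y. psi (x0 + h) y \<partial>M) - (\<integral>y. psi x0 y \<partial>M) - h \<bullet> (\<integral>y. G x0 y \<partial>M)\<bar>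
      = \<bar>\<integral>y. psi (x0 + h) y - psi x0 y - h \<bullet> G x0 y \<partial>M\<bar>"
    using int_psi[of "x0 + h"] int_psi[of x0] int_G h by simp
  also have "\<dots> \<le> (\<integral>y. \<bar>psi (x0 + h) y - psi x0 y - h \<bullet> G x0 y\<bar> \<partial>M)"
    using integral_norm_bound[of M "\<lambda>y. psi (x0 + h) y - psi x0 y - h \<bullet> G x0 y"] by simp
  also have "\<dots> \<le> (\<integral>y. L * (norm h)^2 \<partial>M)"
  proof (rule integral_mono_AE)
    show "integrable M (\<lambda>y. \<bar>psi (x0 + h) y - psi x0 y - h \<bullet> G x0 y\<bar>)"
      using int_psi[of "x0 + h"] int_psi[of x0] int_G h by auto
    show "AE y in M. \<bar>psi (x0 + h) y - psi x0 y - h \<bullet> G x0 y\<bar> \<le> L * (norm h)\<^sup>2"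
      using AE by eventually_elim (rule rem)
  qed simp
  finally show ?thesis by (simp add: prob_space)
qed

lemma has_derivative_integral_lipschitz_grad:
  "((\<lambda>x. \<integral>y. psi x y \<partial>M) has_derivative (\<lambda>h. h \<bullet> (\<integral>y. G x0 y \<partial>M))) (at x0)"
  unfolding has_derivative_at_alt
proof (intro conjI allI impI)
  show "bounded_linear (\<lambda>h. h \<bullet> (\<integral>y. G x0 y \<partial>M))" by (rule bounded_linear_inner_left)
  fix e :: real assume e: "e > 0"
  show "\<exists>d>0. \<forall>x. norm (x - x0) < d \<longrightarrow>
     norm ((\<integral>y. psi x y \<partial>M) - (\<integral>y. psi x0 y \<partial>M) - (x - x0) \<bullet> (\<integral>y. G x0 y \<partial>M))
      \<le> e * norm (x - x0)"
  proof (intro exI[of _ "min 1 (e / (L + 1))"] conjI allI impI)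
    show "0 < min 1 (e / (L + 1))" using e L by auto
    fix x assume x: "norm (x - x0) < min 1 (e / (L + 1))"
    have "L * norm (x - x0) \<le> (L + 1) * (e / (L + 1))"
      using x L by (intro mult_mono) auto
    then have "L * norm (x - x0) * norm (x - x0) \<le> e * norm (x - x0)"
      using L by (intro mult_right_mono) auto
    moreover have "\<bar>(\<integral>y. psi x y \<partial>M) - (\<integral>y. psi x0 y \<partial>M) - (x - x0) \<bullet> (\<integral>y. G x0 y \<partial>M)\<bar>
        \<le> L * (norm (x - x0))^2"
      using integral_first_order_remainder_le[of "x - x0"] x by simp
    ultimately show "norm ((\<integral>y. psi x y \<partial>M) - (\<integral>y. psi x0 y \<partial>M) - (x - x0) \<bullet> (\<integral>y. G x0 y \<partial>M))
      \<le> e * norm (x - x0)" by (simp add: power2_eq_square)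
  qed
qed

end

subsection \<open>The Gaussian kernel and its first two derivatives\<close>

definition gauss_kernel :: "real \<Rightarrow> real \<Rightarrow> real \<Rightarrow> real^'n \<Rightarrow> real^'n \<Rightarrow> real" where
  "gauss_kernel K s c x y = K * exp (- ((x - c *\<^sub>R y) \<bullet> (x - c *\<^sub>R y)) / (2 * s))"

definition gauss_kernel_grad :: "real \<Rightarrow> real \<Rightarrow> real \<Rightarrow> real^'n \<Rightarrow> real^'n \<Rightarrow> real^'n" where
  "gauss_kernel_grad K s c x y = (- gauss_kernel K s c x y / s) *\<^sub>R (x - c *\<^sub>R y)"

definition gauss_kernel_hess :: "real \<Rightarrow> real \<Rightarrow> real \<Rightarrow> 'n \<Rightarrow> real^'n \<Rightarrow> real^'n \<Rightarrow> real^'n" where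
  "gauss_kernel_hess K s c i x y = gauss_kernel K s c x y *\<^sub>R
     ((((x - c *\<^sub>R y) $ i) / s^2) *\<^sub>R (x - c *\<^sub>R y) - (1/s) *\<^sub>R axis i 1)"

lemma gauss_kernel_nonneg: "K \<ge> 0 \<Longrightarrow> gauss_kernel K s c x y \<ge> 0"
  by (simp add: gauss_kernel_def)

lemma gauss_kernel_le:
  assumes "K \<ge> 0" "s > 0"
  shows "gauss_kernel K s c x y \<le> K"
proof -
  have "exp (- ((x - c *\<^sub>R y) \<bullet> (x - c *\<^sub>R y)) / (2 * s)) \<le> 1"
    using assms(2) by simp
  then show ?thesis unfolding gauss_kernel_def using assms(1) by (simp add: mult_left_le)
qed

lemma norm_gauss_kernel_grad:
  "K \<ge> 0 \<Longrightarrow> s > 0 \<Longrightarrow> norm (gauss_kernel_grad K s c x y) = gauss_kernel K s c x y / s * norm (x - c *\<^sub>R y)"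
  by (simp add: gauss_kernel_grad_def gauss_kernel_nonneg)

lemma gauss_kernel_grad_nth:
  "gauss_kernel_grad K s c x y $ i = (- gauss_kernel K s c x y / s) * ((x - c *\<^sub>R y) \<bullet> axis i 1)"
  by (simp add: gauss_kernel_grad_def inner_axis)

lemma gauss_kernel_hess_inner_axis:
  "gauss_kernel_hess K s c i x y = gauss_kernel K s c x y *\<^sub>R
     ((((x - c *\<^sub>R y) \<bullet> axis i 1) / s^2) *\<^sub>R (x - c *\<^sub>R y) - (1/s) *\<^sub>R axis i 1)"
  by (simp add: gauss_kernel_hess_def inner_axis)

lemma has_derivative_gauss_kernel:
  assumes "s > 0"
  shows "((\<lambda>x. gauss_kernel K s c x y) has_derivative (\<lambda>h. h \<bullet> gauss_kernel_grad K s c z y)) (at z)"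
proof -
  have s0: "2 * s \<noteq> 0" using assms by simp
  show ?thesis
    unfolding gauss_kernel_def gauss_kernel_grad_def
    apply (rule derivative_eq_intros refl s0)+
    apply (rule ext)
    using assms apply (simp add: inner_commute algebra_simps divide_simps)
    done
qed

lemma has_derivative_gauss_kernel_grad:
  assumes "s > 0"
  shows "((\<lambda>x. gauss_kernel_grad K s c x y) has_derivative
     (\<lambda>h. (- (h \<bullet> gauss_kernel_grad K s c z y) / s) *\<^sub>R (z - c *\<^sub>R y)
          + (- gauss_kernel K s c z y / s) *\<^sub>R h)) (at z)"
proof -
  have s0: "s \<noteq> 0" using assms by simp
  show ?thesis
    unfolding gauss_kernel_grad_def[of K s c _ y]
    apply (rule derivative_eq_intros refl has_derivative_gauss_kernel[OF assms] s0)+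
    apply (rule ext)
    apply (simp add: gauss_kernel_grad_def algebra_simps)
    done
qed

lemma has_derivative_gauss_kernel_grad_nth:
  assumes "s > 0"
  shows "((\<lambda>x. gauss_kernel_grad K s c x y $ i) has_derivative
     (\<lambda>h. h \<bullet> gauss_kernel_hess K s c i z y)) (at z)"
proof -
  have s0: "s \<noteq> 0" using assms by simp
  show ?thesis
    unfolding gauss_kernel_grad_nth
    apply (rule derivative_eq_intros refl has_derivative_gauss_kernel[OF assms] s0)+
    apply (rule ext)
    using assms apply (simp add: gauss_kernel_hess_def gauss_kernel_grad_def inner_commute
        algebra_simps divide_simps inner_axis power2_eq_square)
    done
qed

lemma has_derivative_gauss_kernel_hess:
  assumes "s > 0"
  shows "((\<lambda>x. gauss_kernel_hess K s c i x y) has_derivative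
     (\<lambda>h. (h \<bullet> gauss_kernel_grad K s c z y) *\<^sub>R
            ((((z - c *\<^sub>R y) \<bullet> axis i 1) / s^2) *\<^sub>R (z - c *\<^sub>R y) - (1/s) *\<^sub>R axis i 1)
          + gauss_kernel K s c z y *\<^sub>R
            (((h \<bullet> axis i 1) / s^2) *\<^sub>R (z - c *\<^sub>R y) + (((z - c *\<^sub>R y) \<bullet> axis i 1) / s^2) *\<^sub>R h)))
     (at z)"
proof -
  have s0: "s^2 \<noteq> 0" using assms by simp
  show ?thesis
    unfolding gauss_kernel_hess_inner_axis[of K s c i _ y]
    apply (rule derivative_eq_intros refl has_derivative_gauss_kernel[OF assms] s0)+
    apply (rule ext)
    apply (simp add: algebra_simps)
    done
qed

lemma norm_diff_scaleR_le:
  fixes x y :: "'a::real_normed_vector"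
  assumes "norm y \<le> R" "0 \<le> c" "c \<le> 1"
  shows "norm (x - c *\<^sub>R y) \<le> norm x + R"
proof -
  have "norm (x - c *\<^sub>R y) \<le> norm x + norm (c *\<^sub>R y)" by (rule norm_triangle_ineq4)
  also have "norm (c *\<^sub>R y) \<le> norm y" using assms by (simp add: mult_left_le_one_le)
  finally show ?thesis using assms by simp
qed

lemma norm_hess_factor_le:
  fixes u :: "real^'n"
  assumes "s > 0" "norm u \<le> r"
  shows "norm (((u \<bullet> axis i 1) / s^2) *\<^sub>R u - (1/s) *\<^sub>R axis i 1) \<le> r^2 / s^2 + 1 / s"
proof -
  have "norm (((u \<bullet> axis i 1) / s^2) *\<^sub>R u - (1/s) *\<^sub>R axis i 1)
     \<le> \<bar>u \<bullet> axis i 1\<bar> / s^2 * norm u + 1 / s"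
    using norm_triangle_ineq4[of "((u \<bullet> axis i 1) / s^2) *\<^sub>R u" "(1/s) *\<^sub>R axis i 1"] assms(1)
    by simp
  also have "\<dots> \<le> r / s^2 * r + 1 / s"
    using Cauchy_Schwarz_ineq2[of u "axis i 1"] assms
    by (intro add_mono mult_mono divide_right_mono) (auto intro: order_trans)
  finally show ?thesis by (simp add: power2_eq_square)
qed

lemma norm_gauss_kernel_hess_le:
  fixes x y :: "real^'n"
  assumes "K \<ge> 0" "s > 0" "norm (x - c *\<^sub>R y) \<le> r"
  shows "norm (gauss_kernel_hess K s c i x y) \<le> gauss_kernel K s c x y * (r^2 / s^2 + 1 / s)"
  unfolding gauss_kernel_hess_inner_axis
  using norm_hess_factor_le[OF assms(2,3), of i] gauss_kernel_nonneg[OF assms(1), of s c x y]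
  by (simp add: mult_left_mono)

context
  fixes K s c r :: real and x0 y :: "real^'n"
  assumes K: "K \<ge> 0" and s: "s > 0"
    and near: "\<And>v. norm (v - x0) \<le> 1 \<Longrightarrow> norm (v - c *\<^sub>R y) \<le> r"
begin

lemma gauss_kernel_grad_lipschitz:
  assumes "norm (z - x0) \<le> 1" "norm (w - x0) \<le> 1"
  shows "norm (gauss_kernel_grad K s c z y - gauss_kernel_grad K s c w y)
     \<le> K * (r^2 / s^2 + 1 / s) * norm (z - w)"
proof (rule lipschitz_on_cball_of_derivative_bound[OF has_derivative_gauss_kernel_grad[OF s] _ assms])
  fix v h :: "real^'n" assume v: "norm (v - x0) \<le> 1"
  let ?p = "gauss_kernel K s c v y" and ?u = "v - c *\<^sub>R y"
  have u: "norm ?u \<le> r" by (rule near[OF v])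
  have p: "0 \<le> ?p" "?p \<le> K" using gauss_kernel_nonneg[OF K] gauss_kernel_le[OF K s] by auto
  have hg: "\<bar>h \<bullet> gauss_kernel_grad K s c v y\<bar> \<le> norm h * (?p / s * norm ?u)"
    using Cauchy_Schwarz_ineq2[of h "gauss_kernel_grad K s c v y"] norm_gauss_kernel_grad[OF K s, of c v y] by simp
  have "norm ((- (h \<bullet> gauss_kernel_grad K s c v y) / s) *\<^sub>R ?u + (- ?p / s) *\<^sub>R h)
      \<le> \<bar>h \<bullet> gauss_kernel_grad K s c v y\<bar> / s * norm ?u + ?p / s * norm h"
    using norm_triangle_ineq[of "(- (h \<bullet> gauss_kernel_grad K s c v y) / s) *\<^sub>R ?u" "(- ?p / s) *\<^sub>R h"]
      s p by simp
  also have "\<dots> \<le> norm h * (?p / s * norm ?u) / s * norm ?u + ?p / s * norm h"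
    using hg s by (intro add_mono mult_right_mono divide_right_mono) auto
  also have "\<dots> = ?p * ((norm ?u)^2 / s^2 + 1 / s) * norm h"
    using s by (simp add: field_simps power2_eq_square)
  also have "\<dots> \<le> K * (r^2 / s^2 + 1 / s) * norm h"
    using p u s by (intro mult_right_mono mult_mono add_mono divide_right_mono power_mono) auto
  finally show "norm ((- (h \<bullet> gauss_kernel_grad K s c v y) / s) *\<^sub>R ?u + (- ?p / s) *\<^sub>R h)
      \<le> K * (r^2 / s^2 + 1 / s) * norm h" .
qed

lemma gauss_kernel_hess_lipschitz:
  assumes "norm (z - x0) \<le> 1" "norm (w - x0) \<le> 1"
  shows "norm (gauss_kernel_hess K s c i z y - gauss_kernel_hess K s c i w y)
     \<le> K * (r / s * (r^2 / s^2 + 1 / s) + 2 * r / s^2) * norm (z - w)"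
proof (rule lipschitz_on_cball_of_derivative_bound[OF has_derivative_gauss_kernel_hess[OF s] _ assms])
  fix v h :: "real^'n" assume v: "norm (v - x0) \<le> 1"
  let ?p = "gauss_kernel K s c v y" and ?u = "v - c *\<^sub>R y"
  let ?V = "((?u \<bullet> axis i 1) / s^2) *\<^sub>R ?u - (1/s) *\<^sub>R axis i 1"
  let ?D = "((h \<bullet> axis i 1) / s^2) *\<^sub>R ?u + ((?u \<bullet> axis i 1) / s^2) *\<^sub>R h"
  have u: "norm ?u \<le> r" by (rule near[OF v])
  have r: "0 \<le> r" using u norm_ge_zero order_trans by blast
  have p: "0 \<le> ?p" "?p \<le> K" using gauss_kernel_nonneg[OF K] gauss_kernel_le[OF K s] by auto
  have "\<bar>h \<bullet> gauss_kernel_grad K s c v y\<bar> \<le> norm h * (?p / s * norm ?u)"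
    using Cauchy_Schwarz_ineq2[of h "gauss_kernel_grad K s c v y"] norm_gauss_kernel_grad[OF K s, of c v y] by simp
  also have "\<dots> \<le> norm h * (K / s * r)"
    using p u s by (intro mult_left_mono mult_mono divide_right_mono) auto
  finally have "\<bar>h \<bullet> gauss_kernel_grad K s c v y\<bar> * norm ?V \<le> norm h * (K / s * r) * (r^2 / s^2 + 1 / s)"
    using norm_hess_factor_le[OF s u, of i] K s r by (intro mult_mono) auto
  then have "norm ((h \<bullet> gauss_kernel_grad K s c v y) *\<^sub>R ?V) \<le> norm h * (K / s * r) * (r^2 / s^2 + 1 / s)"
    by simp
  moreover have "norm ?D \<le> 2 * r / s^2 * norm h"
  proof -
    have hi: "\<bar>h \<bullet> axis i 1\<bar> \<le> norm h" and ui: "\<bar>?u \<bullet> axis i 1\<bar> \<le> r"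
      using Cauchy_Schwarz_ineq2[of h "axis i 1"] Cauchy_Schwarz_ineq2[of ?u "axis i 1"] u by auto
    have "norm ?D \<le> \<bar>h \<bullet> axis i 1\<bar> * norm ?u / s^2 + \<bar>?u \<bullet> axis i 1\<bar> * norm h / s^2"
      using norm_triangle_ineq[of "((h \<bullet> axis i 1) / s^2) *\<^sub>R ?u" "((?u \<bullet> axis i 1) / s^2) *\<^sub>R h"]
      by simp
    also have "\<dots> \<le> norm h * r / s^2 + r * norm h / s^2"
      using hi ui u by (intro add_mono divide_right_mono mult_mono) auto
    finally show ?thesis by (simp add: field_simps)
  qed
  then have "?p * norm ?D \<le> K * (2 * r / s^2 * norm h)"
    using p K by (intro mult_mono) auto
  then have "norm (?p *\<^sub>R ?D) \<le> K * (2 * r / s^2 * norm h)"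
    using p by simp
  ultimately show "norm ((h \<bullet> gauss_kernel_grad K s c v y) *\<^sub>R ?V + ?p *\<^sub>R ?D)
     \<le> K * (r / s * (r^2 / s^2 + 1 / s) + 2 * r / s^2) * norm h"
    using norm_triangle_ineq[of "(h \<bullet> gauss_kernel_grad K s c v y) *\<^sub>R ?V" "?p *\<^sub>R ?D"]
    by (simp add: algebra_simps)
qed

end

subsection \<open>Gaussian mixtures with a compactly supported mixing measure\<close>

definition gauss_mix :: "(real^'n) measure \<Rightarrow> real \<Rightarrow> real \<Rightarrow> real \<Rightarrow> real^'n \<Rightarrow> real" where
  "gauss_mix M K s c x = (\<integral>y. gauss_kernel K s c x y \<partial>M)"

definition gauss_mix_grad :: "(real^'n) measure \<Rightarrow> real \<Rightarrow> real \<Rightarrow> real \<Rightarrow> real^'n \<Rightarrow> real^'n" where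
  "gauss_mix_grad M K s c x = (\<integral>y. gauss_kernel_grad K s c x y \<partial>M)"

definition gauss_mix_hess :: "(real^'n) measure \<Rightarrow> real \<Rightarrow> real \<Rightarrow> real \<Rightarrow> 'n \<Rightarrow> real^'n \<Rightarrow> real^'n" where
  "gauss_mix_hess M K s c i x = (\<integral>y. gauss_kernel_hess K s c i x y \<partial>M)"

locale gauss_mixture =
  fixes M :: "(real^'n) measure" and K s c R :: real
  assumes prob: "prob_space M" and sets_M: "sets M = sets borel"
    and support: "AE y in M. norm y \<le> R"
    and s_pos: "s > 0" and K_pos: "K > 0" and c: "0 \<le> c" "c \<le> 1" and R_nonneg: "R \<ge> 0"
begin

abbreviation "mix \<equiv> gauss_mix M K s c"
abbreviation "mix_grad \<equiv> gauss_mix_grad M K s c"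
abbreviation "mix_hess \<equiv> gauss_mix_hess M K s c"
abbreviation "mix_score x \<equiv> (1 / mix x) *\<^sub>R mix_grad x"

lemma measurable_kernels:
  "gauss_kernel K s c x \<in> borel_measurable M"
  "gauss_kernel_grad K s c x \<in> borel_measurable M"
  "(\<lambda>y. gauss_kernel_grad K s c x y $ i) \<in> borel_measurable M"
  "gauss_kernel_hess K s c i x \<in> borel_measurable M"
  unfolding measurable_cong_sets[OF sets_M refl] gauss_kernel_def gauss_kernel_grad_def gauss_kernel_hess_def
  by (intro borel_measurable_continuous_onI continuous_intros; use s_pos in simp)+

lemma kernel_bounds: "0 \<le> gauss_kernel K s c x y" "gauss_kernel K s c x y \<le> K"
  using gauss_kernel_nonneg[OF less_imp_le[OF K_pos]] gauss_kernel_le[OF less_imp_le[OF K_pos] s_pos]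
  by auto

lemma finite_M: "finite_measure M"
  using prob by (rule prob_space.axioms(1))

lemma norm_kernel_arg_le:
  "norm y \<le> R \<Longrightarrow> norm (x - c *\<^sub>R y) \<le> norm x + R"
  using norm_diff_scaleR_le c by blast

lemma norm_kernel_arg_near_le:
  assumes "norm y \<le> R" "norm (z - x0) \<le> 1"
  shows "norm (z - c *\<^sub>R y) \<le> norm x0 + 1 + R"
  using norm_kernel_arg_le[OF assms(1), of z] norm_triangle_sub[of z x0] assms(2) by simp

lemma norm_kernel_grad_near_le:
  assumes "norm y \<le> R" "norm (z - x0) \<le> 1"
  shows "norm (gauss_kernel_grad K s c z y) \<le> K / s * (norm x0 + 1 + R)"
  unfolding norm_gauss_kernel_grad[OF less_imp_le[OF K_pos] s_pos]
  using kernel_bounds norm_kernel_arg_near_le[OF assms] s_pos K_pos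
  by (intro mult_mono divide_right_mono) auto

lemma integrable_kernel: "integrable M (gauss_kernel K s c x)"
proof (rule finite_measure.integrable_const_bound[OF finite_M, where B=K])
  show "AE y in M. norm (gauss_kernel K s c x y) \<le> K"
    by (intro always_eventually allI) (metis abs_of_nonneg kernel_bounds real_norm_def)
qed (rule measurable_kernels)

lemma integrable_kernel_grad: "integrable M (gauss_kernel_grad K s c x)"
  by (rule finite_measure.integrable_const_bound[OF finite_M, where B="K / s * (norm x + 1 + R)"])
     (use support norm_kernel_grad_near_le[of _ x x] measurable_kernels in \<open>auto elim: AE_mp\<close>)

lemma integrable_kernel_hess: "integrable M (gauss_kernel_hess K s c i x)"
proof (rule finite_measure.integrable_const_bound[OF finite_M, where B="K * ((norm x + R)^2 / s^2 + 1 / s)"])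
  show "AE y in M. norm (gauss_kernel_hess K s c i x y) \<le> K * ((norm x + R)\<^sup>2 / s\<^sup>2 + 1 / s)"
    using support
  proof eventually_elim
    fix y :: "real^'n" assume "norm y \<le> R"
    then have "norm (gauss_kernel_hess K s c i x y) \<le> gauss_kernel K s c x y * ((norm x + R)^2 / s^2 + 1 / s)"
      using K_pos s_pos by (intro norm_gauss_kernel_hess_le norm_kernel_arg_le) auto
    also have "\<dots> \<le> K * ((norm x + R)^2 / s^2 + 1 / s)"
      using kernel_bounds s_pos by (intro mult_right_mono) auto
    finally show "norm (gauss_kernel_hess K s c i x y) \<le> K * ((norm x + R)\<^sup>2 / s\<^sup>2 + 1 / s)" .
  qed
qed (rule measurable_kernels)

lemma mix_grad_nth: "mix_grad x $ i = (\<integral>y. gauss_kernel_grad K s c x y $ i \<partial>M)"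
  unfolding gauss_mix_grad_def
  by (rule integral_bounded_linear[OF bounded_linear_vec_nth integrable_kernel_grad, symmetric])

lemma mix_hess_nth: "mix_hess i x $ j = (\<integral>y. gauss_kernel_hess K s c i x y $ j \<partial>M)"
  unfolding gauss_mix_hess_def
  by (rule integral_bounded_linear[OF bounded_linear_vec_nth integrable_kernel_hess, symmetric])

lemma has_derivative_mix: "(mix has_derivative (\<lambda>h. h \<bullet> mix_grad x0)) (at x0)"
  unfolding gauss_mix_def[abs_def] gauss_mix_grad_def
proof (rule has_derivative_integral_lipschitz_grad[OF prob support measurable_kernels(1,2)
      has_derivative_gauss_kernel[OF s_pos]])
  fix y z :: "real^'n" assume y: "norm y \<le> R" and z: "norm (z - x0) \<le> 1"
  have "0 \<le> K / s * (norm x0 + 1 + R)" using K_pos s_pos R_nonneg by simp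
  then show "\<bar>gauss_kernel K s c z y\<bar> \<le> K + K / s * (norm x0 + 1 + R) \<and>
        norm (gauss_kernel_grad K s c z y) \<le> K + K / s * (norm x0 + 1 + R)"
    using kernel_bounds[of z y] norm_kernel_grad_near_le[OF y z] K_pos by auto
next
  fix y z w :: "real^'n" assume "norm y \<le> R" "norm (z - x0) \<le> 1" "norm (w - x0) \<le> 1"
  then show "norm (gauss_kernel_grad K s c z y - gauss_kernel_grad K s c w y)
      \<le> K * ((norm x0 + 1 + R)^2 / s^2 + 1 / s) * norm (z - w)"
    using K_pos s_pos norm_kernel_arg_near_le by (intro gauss_kernel_grad_lipschitz) auto
qed (use K_pos s_pos in simp)

lemma has_derivative_mix_grad_nth:
  "((\<lambda>x. mix_grad x $ i) has_derivative (\<lambda>h. h \<bullet> mix_hess i x0)) (at x0)"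
  unfolding mix_grad_nth gauss_mix_hess_def
proof (rule has_derivative_integral_lipschitz_grad[OF prob support measurable_kernels(3,4)
      has_derivative_gauss_kernel_grad_nth[OF s_pos]])
  fix y z :: "real^'n" assume y: "norm y \<le> R" and z: "norm (z - x0) \<le> 1"
  let ?r = "norm x0 + 1 + R"
  have "\<bar>gauss_kernel_grad K s c z y $ i\<bar> \<le> K / s * ?r"
    using component_le_norm_cart[of "gauss_kernel_grad K s c z y" i] norm_kernel_grad_near_le[OF y z]
    by linarith
  moreover have "norm (gauss_kernel_hess K s c i z y) \<le> gauss_kernel K s c z y * (?r^2 / s^2 + 1 / s)"
    using K_pos s_pos norm_kernel_arg_near_le[OF y z] by (intro norm_gauss_kernel_hess_le) auto
  moreover have "gauss_kernel K s c z y * (?r^2 / s^2 + 1 / s) \<le> K * (?r^2 / s^2 + 1 / s)"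
    using kernel_bounds s_pos by (intro mult_right_mono) auto
  moreover have "0 \<le> K / s * ?r" "0 \<le> K * (?r^2 / s^2 + 1 / s)"
    using K_pos s_pos R_nonneg by auto
  ultimately show "\<bar>gauss_kernel_grad K s c z y $ i\<bar> \<le> K / s * ?r + K * (?r^2 / s^2 + 1 / s) \<and>
        norm (gauss_kernel_hess K s c i z y) \<le> K / s * ?r + K * (?r^2 / s^2 + 1 / s)"
    by linarith
next
  fix y z w :: "real^'n" assume "norm y \<le> R" "norm (z - x0) \<le> 1" "norm (w - x0) \<le> 1"
  then show "norm (gauss_kernel_hess K s c i z y - gauss_kernel_hess K s c i w y)
      \<le> K * ((norm x0 + 1 + R) / s * ((norm x0 + 1 + R)^2 / s^2 + 1 / s) + 2 * (norm x0 + 1 + R) / s^2)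
         * norm (z - w)"
    using K_pos s_pos norm_kernel_arg_near_le by (intro gauss_kernel_hess_lipschitz) auto
qed (use K_pos s_pos R_nonneg in simp)

lemma has_derivative_mix_grad: "(mix_grad has_derivative (\<lambda>h. \<chi> i. h \<bullet> mix_hess i x)) (at x)"
proof -
  have "((\<lambda>z. mix_grad z \<bullet> b) has_derivative (\<lambda>h. (\<chi> i. h \<bullet> mix_hess i x) \<bullet> b)) (at x)"
    if "b \<in> Basis" for b
  proof -
    obtain j where "b = axis j 1" using \<open>b \<in> Basis\<close> by (auto simp: Basis_vec_def)
    then show ?thesis using has_derivative_mix_grad_nth[of j x] by (simp add: inner_axis)
  qed
  then show ?thesis using has_derivative_componentwise_within[of mix_grad _ x UNIV] by simp
qed

lemma mix_lower_bound: "K * exp (- ((norm x + R)^2) / (2 * s)) \<le> mix x"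
proof -
  have "(\<integral>y. K * exp (- ((norm x + R)^2) / (2 * s)) \<partial>M) \<le> mix x"
    unfolding gauss_mix_def
  proof (rule integral_mono_AE[OF _ integrable_kernel])
    show "AE y in M. K * exp (- ((norm x + R)\<^sup>2) / (2 * s)) \<le> gauss_kernel K s c x y"
      using support
    proof eventually_elim
      fix y :: "real^'n" assume "norm y \<le> R"
      then have "(norm (x - c *\<^sub>R y))^2 \<le> (norm x + R)^2"
        by (intro power_mono norm_kernel_arg_le) auto
      then have "(x - c *\<^sub>R y) \<bullet> (x - c *\<^sub>R y) \<le> (norm x + R)^2"
        by (simp add: power2_norm_eq_inner)
      then show "K * exp (- ((norm x + R)\<^sup>2) / (2 * s)) \<le> gauss_kernel K s c x y"
        unfolding gauss_kernel_def using s_pos K_pos by (auto intro!: mult_left_mono divide_right_mono)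
    qed
  qed (simp add: finite_measure.integrable_const[OF finite_M])
  then show ?thesis using prob by (simp add: prob_space.prob_space)
qed

lemma mix_pos: "mix x > 0"
  using mix_lower_bound[of x] K_pos by (smt (verit) exp_gt_zero mult_pos_pos)

lemma mix_le: "mix x \<le> K"
proof -
  have "mix x \<le> (\<integral>y. K \<partial>M)" unfolding gauss_mix_def
    by (rule integral_mono_AE[OF integrable_kernel])
      (use kernel_bounds finite_measure.integrable_const[OF finite_M] in \<open>auto intro!: always_eventually\<close>)
  then show ?thesis using prob by (simp add: prob_space.prob_space)
qed

lemma abs_integral_le_mix:
  assumes "integrable M f" "AE y in M. \<bar>f y\<bar> \<le> gauss_kernel K s c x y * a"
  shows "\<bar>\<integral>y. f y \<partial>M\<bar> \<le> mix x * a"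
proof -
  have "\<bar>\<integral>y. f y \<partial>M\<bar> \<le> (\<integral>y. \<bar>f y\<bar> \<partial>M)"
    using integral_norm_bound[of M f] by simp
  also have "\<dots> \<le> (\<integral>y. gauss_kernel K s c x y * a \<partial>M)"
    by (rule integral_mono_AE) (use assms integrable_kernel in auto)
  also have "\<dots> = mix x * a" unfolding gauss_mix_def by simp
  finally show ?thesis .
qed

lemma abs_mix_grad_nth_le: "\<bar>mix_grad x $ i\<bar> \<le> mix x * ((norm x + R) / s)"
  unfolding mix_grad_nth
proof (rule abs_integral_le_mix)
  show "integrable M (\<lambda>y. gauss_kernel_grad K s c x y $ i)"
    using integrable_bounded_linear[OF bounded_linear_vec_nth integrable_kernel_grad] by simp
  show "AE y in M. \<bar>gauss_kernel_grad K s c x y $ i\<bar> \<le> gauss_kernel K s c x y * ((norm x + R) / s)"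
    using support
  proof eventually_elim
    fix y :: "real^'n" assume y: "norm y \<le> R"
    have "\<bar>gauss_kernel_grad K s c x y $ i\<bar> \<le> gauss_kernel K s c x y / s * norm (x - c *\<^sub>R y)"
      using component_le_norm_cart[of "gauss_kernel_grad K s c x y" i]
        norm_gauss_kernel_grad[OF less_imp_le[OF K_pos] s_pos, of c x y] by simp
    also have "\<dots> \<le> gauss_kernel K s c x y / s * (norm x + R)"
      using norm_kernel_arg_le[OF y] kernel_bounds s_pos by (intro mult_left_mono) (auto intro: divide_nonneg_pos)
    finally show "\<bar>gauss_kernel_grad K s c x y $ i\<bar> \<le> gauss_kernel K s c x y * ((norm x + R) / s)"
      by simp
  qed
qed

lemma abs_mix_hess_nth_le: "\<bar>mix_hess i x $ j\<bar> \<le> mix x * ((norm x + R)^2 / s^2 + 1 / s)"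
  unfolding mix_hess_nth
proof (rule abs_integral_le_mix)
  show "integrable M (\<lambda>y. gauss_kernel_hess K s c i x y $ j)"
    using integrable_bounded_linear[OF bounded_linear_vec_nth integrable_kernel_hess] by simp
  show "AE y in M. \<bar>gauss_kernel_hess K s c i x y $ j\<bar>
      \<le> gauss_kernel K s c x y * ((norm x + R)^2 / s^2 + 1 / s)"
    using support
  proof eventually_elim
    fix y :: "real^'n" assume "norm y \<le> R"
    then have "norm (gauss_kernel_hess K s c i x y) \<le> gauss_kernel K s c x y * ((norm x + R)^2 / s^2 + 1 / s)"
      using K_pos s_pos by (intro norm_gauss_kernel_hess_le norm_kernel_arg_le) auto
    then show "\<bar>gauss_kernel_hess K s c i x y $ j\<bar> \<le> gauss_kernel K s c x y * ((norm x + R)^2 / s^2 + 1 / s)"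
      using component_le_norm_cart[of "gauss_kernel_hess K s c i x y" j] by linarith
  qed
qed

lemma abs_mix_score_nth_le: "\<bar>mix_score x $ i\<bar> \<le> (norm x + R) / s"
  using abs_mix_grad_nth_le[of x i] mix_pos[of x] by (simp add: divide_le_eq mult.commute)

lemma norm_mix_score_le: "norm (mix_score x) \<le> real CARD('n) * ((norm x + R) / s)"
proof -
  have "norm (mix_score x) \<le> (\<Sum>i\<in>UNIV. \<bar>mix_score x $ i\<bar>)" by (rule norm_le_l1_cart)
  also have "\<dots> \<le> (\<Sum>i\<in>(UNIV::'n set). (norm x + R) / s)"
    by (rule sum_mono) (rule abs_mix_score_nth_le)
  finally show ?thesis by simp
qed

lemma grad_ln_mix_eq_mix_score:
  "(\<chi> i. frechet_derivative (\<lambda>z. ln (mix z)) (at x) (axis i 1)) = mix_score x"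
proof -
  have d: "((\<lambda>z. ln (mix z)) has_derivative (\<lambda>h. inverse (mix x) * (h \<bullet> mix_grad x))) (at x)"
    by (rule has_derivative_compose[OF has_derivative_mix, of ln "\<lambda>h. inverse (mix x) * h", simplified o_def])
       (use DERIV_ln[OF mix_pos[of x]] in \<open>simp add: has_field_derivative_def mult.commute[of _ "inverse (mix x)"]\<close>)
  show ?thesis
    unfolding frechet_derivative_at[OF d, symmetric]
    by (simp add: vec_eq_iff inner_axis inner_commute[of "axis _ 1"] divide_inverse)
qed

lemma has_derivative_scaled_mix_score:
  "((\<lambda>x. a *\<^sub>R mix_score x) has_derivative
     (\<lambda>h. a *\<^sub>R ((- (h \<bullet> mix_grad x) / (mix x)^2) *\<^sub>R mix_grad x
            + (1 / mix x) *\<^sub>R (\<chi> i. h \<bullet> mix_hess i x)))) (at x)"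
proof -
  have p: "mix x \<noteq> 0" using mix_pos[of x] by simp
  show ?thesis
    apply (rule derivative_eq_intros refl has_derivative_mix_grad has_derivative_mix p)+
    apply (rule ext)
    using p apply (simp add: power2_eq_square algebra_simps divide_simps)
    done
qed

lemma abs_matrix_deriv_scaled_mix_score_le:
  "\<bar>matrix (frechet_derivative (\<lambda>x. (-s) *\<^sub>R mix_score x) (at x)) $ i $ j\<bar> \<le> 2 * (norm x + R)^2 / s + 1"
proof -
  let ?\<rho> = "norm x + R"
  have p: "mix x > 0" by (rule mix_pos)
  have entry: "matrix (frechet_derivative (\<lambda>x. (-s) *\<^sub>R mix_score x) (at x)) $ i $ j
      = (-s) * (mix_hess i x $ j / mix x - mix_score x $ j * mix_score x $ i)"
    unfolding frechet_derivative_at[OF has_derivative_scaled_mix_score, symmetric]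
    using p by (simp add: matrix_def inner_axis inner_commute[of "axis _ 1"] power2_eq_square field_simps)
  have "\<bar>mix_hess i x $ j / mix x\<bar> \<le> ?\<rho>^2 / s^2 + 1 / s"
    using abs_mix_hess_nth_le[of i x j] p by (simp add: divide_le_eq mult.commute)
  moreover have "\<bar>mix_score x $ j * mix_score x $ i\<bar> \<le> ?\<rho> / s * (?\<rho> / s)"
    unfolding abs_mult using abs_mix_score_nth_le s_pos R_nonneg by (intro mult_mono) auto
  ultimately have "\<bar>mix_hess i x $ j / mix x - mix_score x $ j * mix_score x $ i\<bar>
      \<le> ?\<rho> / s * (?\<rho> / s) + (?\<rho>^2 / s^2 + 1 / s)"
    using abs_triangle_ineq4[of "mix_hess i x $ j / mix x" "mix_score x $ j * mix_score x $ i"] by linarith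
  then have "\<bar>(-s) * (mix_hess i x $ j / mix x - mix_score x $ j * mix_score x $ i)\<bar>
      \<le> s * (?\<rho> / s * (?\<rho> / s) + (?\<rho>^2 / s^2 + 1 / s))"
    using s_pos by (simp add: abs_mult)
  also have "\<dots> = 2 * ?\<rho>^2 / s + 1" using s_pos by (simp add: field_simps power2_eq_square)
  finally show ?thesis unfolding entry .
qed

end

subsection \<open>Matrices of the form \<open>k (A A\<^sup>T + I)\<close>\<close>

lemma inner_scaled_gram_plus_id:
  fixes A :: "real^'n^'n"
  shows "((k *\<^sub>R (A ** transpose A + mat 1)) *v w) \<bullet> w = k * ((norm (transpose A *v w))^2 + (norm w)^2)"
proof -
  have "(k *\<^sub>R (A ** transpose A + mat 1)) *v w = k *\<^sub>R (A *v (transpose A *v w) + w)"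
    unfolding scaleR_matrix_vector_assoc[symmetric] matrix_vector_mult_add_rdistrib
      matrix_vector_mul_lid matrix_vector_mul_assoc[symmetric] ..
  moreover have "(A *v u) \<bullet> w = u \<bullet> (transpose A *v w)" for u
    by (metis dot_lmul_matrix inner_commute vector_transpose_matrix)
  ultimately show ?thesis
    by (simp add: inner_add_left power2_norm_eq_inner)
qed

lemma invertible_scaled_gram_plus_id:
  fixes A :: "real^'n^'n"
  assumes "k > 0"
  shows "invertible (k *\<^sub>R (A ** transpose A + mat 1))"
  unfolding invertible_left_inverse matrix_left_invertible_ker
proof (intro allI impI)
  fix w assume "(k *\<^sub>R (A ** transpose A + mat 1)) *v w = 0"
  then have "k * ((norm (transpose A *v w))^2 + (norm w)^2) = 0"
    using inner_scaled_gram_plus_id[of k A w] by simp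
  then show "w = 0" using assms by (simp add: add_nonneg_eq_0_iff)
qed

text \<open>Since \<open>k (A A\<^sup>T + I) \<ge> k I\<close>, its inverse is at most \<open>I / k\<close>.\<close>

lemma quadratic_form_inv_scaled_gram_plus_id_le:
  fixes A :: "real^'n^'n" and v :: "real^'n"
  assumes k: "k > 0"
  shows "v \<bullet> (matrix_inv (k *\<^sub>R (A ** transpose A + mat 1)) *v v) \<le> (norm v)^2 / k"
proof -
  define S where "S = k *\<^sub>R (A ** transpose A + mat 1)"
  have "S ** matrix_inv S = mat 1"
    using invertible_scaled_gram_plus_id[OF k, of A] unfolding S_def invertible_def matrix_inv_def
    by (rule someI2_ex) blast
  then have Sw: "S *v w = v" if "w = matrix_inv S *v v" for w
    using that by (simp add: matrix_vector_mul_assoc)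
  define w where "w = matrix_inv S *v v"
  have vw: "v \<bullet> w = k * ((norm (transpose A *v w))^2 + (norm w)^2)"
    using inner_scaled_gram_plus_id[of k A w] Sw[OF w_def] by (simp add: S_def inner_commute)
  have le: "v \<bullet> w \<le> norm v * norm w" by (rule order_trans[OF abs_ge_self Cauchy_Schwarz_ineq2])
  have "k * (norm w)^2 \<le> k * ((norm (transpose A *v w))^2 + (norm w)^2)"
    using k by (intro mult_left_mono) auto
  then have "(k * norm w) * norm w \<le> norm v * norm w"
    using vw le by (simp add: power2_eq_square mult.assoc)
  then have "k * norm w \<le> norm v"
  proof (cases "w = 0")
    case False
    then show ?thesis using \<open>(k * norm w) * norm w \<le> norm v * norm w\<close> by simp
  qed simp
  then have "norm v * norm w \<le> norm v * (norm v / k)"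
    using k by (intro mult_left_mono) (auto simp: field_simps)
  then show ?thesis using le unfolding w_def S_def by (simp add: power2_eq_square)
qed

lemma abs_det_le_entrywise:
  fixes A :: "real^'n^'n"
  assumes "\<And>i j. \<bar>A $ i $ j\<bar> \<le> m"
  shows "\<bar>det A\<bar> \<le> fact CARD('n) * m ^ CARD('n)"
proof -
  have "\<bar>det A\<bar> \<le> (\<Sum>p\<in>{p. p permutes (UNIV::'n set)}. \<bar>of_int (sign p) * (\<Prod>i\<in>UNIV. A $ i $ p i)\<bar>)"
    unfolding det_def by (rule sum_abs)
  also have "\<dots> \<le> (\<Sum>p\<in>{p. p permutes (UNIV::'n set)}. m ^ CARD('n))"
  proof (rule sum_mono)
    fix p
    have "\<bar>of_int (sign p) * (\<Prod>i\<in>UNIV. A $ i $ p i)\<bar> = (\<Prod>i\<in>(UNIV::'n set). \<bar>A $ i $ p i\<bar>)"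
      by (simp add: abs_mult sign_def abs_prod)
    also have "\<dots> \<le> (\<Prod>i\<in>(UNIV::'n set). m)"
      by (rule prod_mono) (use assms in auto)
    finally show "\<bar>of_int (sign p) * (\<Prod>i\<in>UNIV. A $ i $ p i)\<bar> \<le> m ^ CARD('n)" by simp
  qed
  also have "\<dots> = fact CARD('n) * m ^ CARD('n)"
    by (simp add: card_permutations)
  finally show ?thesis .
qed

lemma abs_scaled_gram_plus_id_nth_le:
  fixes A :: "real^'n^'n"
  assumes k: "0 \<le> k" and A: "\<And>i j. \<bar>A $ i $ j\<bar> \<le> m"
  shows "\<bar>(k *\<^sub>R (A ** transpose A + mat 1)) $ i $ j\<bar> \<le> k * (real CARD('n) * m^2 + 1)"
proof -
  have "\<bar>(A ** transpose A) $ i $ j\<bar> \<le> (\<Sum>l\<in>(UNIV::'n set). \<bar>A $ i $ l * A $ j $ l\<bar>)"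
    by (simp add: matrix_matrix_mult_def transpose_def sum_abs)
  also have "\<dots> \<le> (\<Sum>l\<in>(UNIV::'n set). m^2)"
    by (rule sum_mono) (use A in \<open>auto simp: abs_mult power2_eq_square intro: mult_mono order_trans[OF abs_ge_zero]\<close>)
  finally have "\<bar>(A ** transpose A) $ i $ j\<bar> \<le> real CARD('n) * m^2" by simp
  moreover have "\<bar>(mat 1 :: real^'n^'n) $ i $ j\<bar> \<le> 1" by (simp add: mat_def)
  ultimately have "\<bar>(A ** transpose A + mat 1) $ i $ j\<bar> \<le> real CARD('n) * m^2 + 1"
    using abs_triangle_ineq[of "(A ** transpose A) $ i $ j" "(mat 1 :: real^'n^'n) $ i $ j"] by simp
  then show ?thesis using k by (simp add: abs_mult mult_left_mono)
qed

subsection \<open>The learning-rate schedule\<close>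

locale lr_regime =
  fixes T :: nat and c0 c1 :: real
  assumes T_ge_2: "2 \<le> T" and c0_ge_1: "1 \<le> c0"
    and c1_ln_ge_1: "1 \<le> c1 * ln (real T)" and c1_ln_le: "c1 * ln (real T) / real T \<le> 1/2"
begin

definition noise_var :: "nat \<Rightarrow> real" where
  "noise_var k = 1 - lr_alphabar T c0 c1 k"

lemma T_powr_neg_c0: "0 < real T powr (- c0)" "real T powr (- c0) \<le> 1/2"
proof -
  have "real T powr (- c0) \<le> real T powr (-1)" using T_ge_2 c0_ge_1 by (intro powr_mono) auto
  also have "real T powr (-1) = 1 / real T" using T_ge_2 by (simp add: powr_minus_divide)
  also have "\<dots> \<le> 1/2" using T_ge_2 by simp
  finally show "real T powr (- c0) \<le> 1/2" .
  show "0 < real T powr (- c0)" using T_ge_2 by simp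
qed

lemma lr_beta_bounds:
  assumes "1 \<le> k"
  shows "0 < lr_beta T c0 c1 k" "lr_beta T c0 c1 k \<le> 1/2"
    and "2 \<le> k \<Longrightarrow> real T powr (- (c0 + 1)) \<le> lr_beta T c0 c1 k"
proof -
  define q where "q = c1 * ln (real T) / real T"
  have q: "0 < q" "q \<le> 1/2" "1 / real T \<le> q"
    using c1_ln_ge_1 c1_ln_le T_ge_2 unfolding q_def by (simp_all add: divide_right_mono)
  have "real T powr (- c0) * 1 \<le> real T powr (- c0) * (1 + q) ^ k"
    using T_powr_neg_c0 q by (intro mult_left_mono one_le_power) auto
  then have "real T powr (- c0) \<le> min (real T powr (- c0) * (1 + q) ^ k) 1"
    using T_powr_neg_c0 by simp
  moreover have beta: "lr_beta T c0 c1 k = (if k \<le> 1 then real T powr (- c0)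
      else q * min (real T powr (- c0) * (1 + q) ^ k) 1)"
    unfolding lr_beta_def q_def by simp
  moreover have "q * min (real T powr (- c0) * (1 + q) ^ k) 1 \<le> 1/2"
    using mult_left_mono[OF min.cobounded2, of q "real T powr (- c0) * (1 + q) ^ k" 1] q by linarith
  ultimately show "0 < lr_beta T c0 c1 k" "lr_beta T c0 c1 k \<le> 1/2"
    using T_powr_neg_c0 q by auto
  assume "2 \<le> k"
  have "real T powr (- (c0 + 1)) = real T powr (-1) * real T powr (- c0)"
    by (subst powr_add[symmetric]) (simp add: algebra_simps)
  also have "\<dots> = (1 / real T) * real T powr (- c0)"
    using T_ge_2 by (simp add: powr_minus_divide)
  also have "\<dots> \<le> q * real T powr (- c0)"
    using q T_powr_neg_c0 by (intro mult_right_mono) auto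
  also have "\<dots> \<le> q * min (real T powr (- c0) * (1 + q) ^ k) 1"
    using q \<open>real T powr (- c0) \<le> min _ 1\<close> by (intro mult_left_mono) auto
  finally show "real T powr (- (c0 + 1)) \<le> lr_beta T c0 c1 k"
    using beta \<open>2 \<le> k\<close> by simp
qed

lemma lr_alpha_bounds: "1 \<le> k \<Longrightarrow> 1/2 \<le> lr_alpha T c0 c1 k \<and> lr_alpha T c0 c1 k < 1"
  using lr_beta_bounds unfolding lr_alpha_def by fastforce

lemma lr_alphabar_split:
  "j \<in> {1..k} \<Longrightarrow> lr_alphabar T c0 c1 k = lr_alpha T c0 c1 j * (\<Prod>i\<in>{1..k} - {j}. lr_alpha T c0 c1 i)"
  unfolding lr_alphabar_def by (simp add: prod.remove)

lemma lr_alpha_pos_le_1: "i \<in> {1..k} \<Longrightarrow> 0 < lr_alpha T c0 c1 i \<and> lr_alpha T c0 c1 i \<le> 1"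
  using lr_alpha_bounds by force

lemma lr_alphabar_pos: "0 < lr_alphabar T c0 c1 k"
  unfolding lr_alphabar_def using lr_alpha_pos_le_1 by (intro prod_pos) auto

lemma lr_alphabar_le_lr_alpha:
  assumes "j \<in> {1..k}"
  shows "lr_alphabar T c0 c1 k \<le> lr_alpha T c0 c1 j"
proof -
  have "(\<Prod>i\<in>{1..k} - {j}. lr_alpha T c0 c1 i) \<le> 1"
    using lr_alpha_pos_le_1 by (intro prod_le_1) (auto intro: less_imp_le)
  then show ?thesis
    using lr_alphabar_split[OF assms] lr_alpha_pos_le_1[OF assms] mult_left_le[of _ "lr_alpha T c0 c1 j"]
    by simp
qed

lemma noise_var_bounds:
  assumes "1 \<le> k"
  shows "real T powr (- c0) \<le> noise_var k" "noise_var k < 1" "lr_beta T c0 c1 k \<le> noise_var k"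
  using lr_alphabar_pos[of k] lr_alphabar_le_lr_alpha[of 1 k] lr_alphabar_le_lr_alpha[of k k] assms
  by (auto simp: noise_var_def lr_alpha_def lr_beta_def)

end

subsection \<open>One step of the reverse process\<close>

lemma pX_eq_gauss_mix:
  fixes M :: "(real^'n) measure"
  assumes "0 < 1 - lr_alphabar T c0 c1 k"
  shows "pX T c0 c1 M k = gauss_mix M (gauss_const CARD('n) (1 - lr_alphabar T c0 c1 k))
           (1 - lr_alphabar T c0 c1 k) (sqrt (lr_alphabar T c0 c1 k))"
  unfolding pX_def[abs_def] gauss_mix_def[abs_def] gauss_kernel_def
  using assms by (simp add: gauss_pdf_scaleR_mat_1)

lemma minus_ln_le_of_powr_le:
  fixes a b x :: real
  assumes "1 < b" "b powr (- a) \<le> x"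
  shows "- ln x \<le> a * ln b"
proof -
  have "ln (b powr (- a)) \<le> ln x"
    by (rule ln_mono[OF assms(2)]) (use assms(1) in simp)
  then show ?thesis using assms(1) by (simp add: ln_powr)
qed

definition ratio_const :: "nat \<Rightarrow> real" where
  "ratio_const d = real d * ln (2 * pi) + ln (fact d) / 2 + real d / 2 * ln (36 * real d + 1)"

lemma ratio_const_nonneg: "0 \<le> ratio_const d"
proof -
  have "0 \<le> ln (2 * pi)" using pi_gt3 by (intro ln_ge_zero) simp
  moreover have "0 \<le> ln (fact d :: real)" by (intro ln_ge_zero) (simp add: fact_ge_1)
  moreover have "0 \<le> ln (36 * real d + 1)" by (intro ln_ge_zero) simp
  ultimately show ?thesis unfolding ratio_const_def by simp
qed

lemma add_mult_add_le_square:
  fixes C c D T :: real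
  assumes "0 \<le> C" "0 \<le> D" "1 \<le> T" "C + c + D \<le> T"
  shows "C + c * T + D \<le> T^2"
proof -
  have "C + c * T + D \<le> (C + c + D) * T"
    using assms mult_left_mono[of 1 T C] mult_left_mono[of 1 T D] by (simp add: algebra_simps)
  also have "\<dots> \<le> T * T" using assms by (intro mult_right_mono) auto
  finally show ?thesis by (simp add: power2_eq_square)
qed

text \<open>Isabelle's real logarithm satisfies \<open>ln x = ln \<bar>x\<bar>\<close>, so no sign information on
  the determinant of the covariance is needed below.\<close>

lemma ln_abs_real: "ln \<bar>x\<bar> = ln (x::real)"
  by (simp add: ln_real_def)

locale diffusion_step = lr_regime +
  fixes M :: "(real^'n) measure" and cR :: real and t :: nat
  assumes prob: "prob_space M" and sets_M: "sets M = sets borel"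
    and support: "AE y in M. norm y \<le> real T powr cR"
    and cR_pos: "0 < cR" and t_ge_2: "2 \<le> t"
begin

abbreviation "R \<equiv> real T powr cR"
abbreviation "\<alpha> \<equiv> lr_alpha T c0 c1 t"
abbreviation "\<beta> \<equiv> lr_beta T c0 c1 t"
abbreviation "\<sigma> \<equiv> noise_var t"
abbreviation "\<sigma>' \<equiv> noise_var (t - 1)"

lemma R_ge_1: "1 \<le> R"
  using T_ge_2 cR_pos by (simp add: ge_one_powr_ge_zero)

lemma alpha_eq: "\<alpha> = 1 - \<beta>"
  by (simp add: lr_alpha_def)

lemma step_bounds:
  "0 < \<beta>" "\<beta> \<le> 1/2" "real T powr (- (c0 + 1)) \<le> \<beta>" "\<beta> \<le> \<sigma>"
  "real T powr (- c0) \<le> \<sigma>" "\<sigma> < 1" "real T powr (- c0) \<le> \<sigma>'" "\<sigma>' < 1"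
proof -
  have "1 \<le> t" "1 \<le> t - 1" "2 \<le> t" using t_ge_2 by simp_all
  from lr_beta_bounds[OF this(1)] noise_var_bounds[OF this(1)] noise_var_bounds[OF this(2)] this(3)
  show "0 < \<beta>" "\<beta> \<le> 1/2" "real T powr (- (c0 + 1)) \<le> \<beta>" "\<beta> \<le> \<sigma>"
    "real T powr (- c0) \<le> \<sigma>" "\<sigma> < 1" "real T powr (- c0) \<le> \<sigma>'" "\<sigma>' < 1"
    by blast+
qed

lemma gauss_mixture_noise_var:
  assumes "1 \<le> k"
  shows "gauss_mixture M (gauss_const CARD('n) (noise_var k)) (noise_var k) (sqrt (lr_alphabar T c0 c1 k)) R"
proof (rule gauss_mixture.intro)
  show pos: "0 < noise_var k" using noise_var_bounds(1)[OF assms] T_powr_neg_c0 by linarith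
  then show "0 < gauss_const CARD('n) (noise_var k)" by (rule gauss_const_pos)
  show "sqrt (lr_alphabar T c0 c1 k) \<le> 1"
    using pos by (simp add: noise_var_def)
  show "0 \<le> sqrt (lr_alphabar T c0 c1 k)" using lr_alphabar_pos[of k] by simp
  show "0 \<le> R" using R_ge_1 by linarith
qed (fact prob sets_M support)+

sublocale Xt: gauss_mixture M "gauss_const CARD('n) \<sigma>" \<sigma> "sqrt (lr_alphabar T c0 c1 t)" R
  by (rule gauss_mixture_noise_var) (use t_ge_2 in linarith)

sublocale Xs: gauss_mixture M "gauss_const CARD('n) \<sigma>'" \<sigma>' "sqrt (lr_alphabar T c0 c1 (t - 1))" R
  by (rule gauss_mixture_noise_var) (use t_ge_2 in linarith)

lemma pX_eq_mix: "pX T c0 c1 M t = Xt.mix" "pX T c0 c1 M (t - 1) = Xs.mix"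
  using pX_eq_gauss_mix Xt.s_pos Xs.s_pos unfolding noise_var_def by auto

lemma condX_eq:
  "condX T c0 c1 M t xprev xt = Xs.mix xprev * gauss_pdf (sqrt \<alpha> *\<^sub>R xprev) (\<beta> *\<^sub>R mat 1) xt / Xt.mix xt"
  unfolding condX_def pX_eq_mix alpha_eq by simp

lemma score_eq: "score T c0 c1 M t = Xt.mix_score"
  unfolding score_def[abs_def] pX_eq_mix Xt.grad_ln_mix_eq_mix_score ..

lemma abs_Jac_nth_le: "\<bar>Jac T c0 c1 M t x $ i $ j\<bar> \<le> 2 * (norm x + R)^2 / \<sigma> + 1"
proof -
  have "gfun T c0 c1 M t = (\<lambda>x. (- \<sigma>) *\<^sub>R Xt.mix_score x)"
    unfolding gfun_def[abs_def] score_eq noise_var_def ..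
  then show ?thesis unfolding Jac_def by (simp only: Xt.abs_matrix_deriv_scaled_mix_score_le)
qed

lemma muhat_eq: "muhat T c0 c1 M t x = (1 / sqrt \<alpha>) *\<^sub>R (x + \<beta> *\<^sub>R Xt.mix_score x)"
  unfolding muhat_def score_eq alpha_eq by simp

abbreviation "Acov x \<equiv> mat 1 - (\<beta> / \<sigma>) *\<^sub>R Jac T c0 c1 M t x"

lemma SigmaH_eq: "SigmaH T c0 c1 M t x = (\<beta> / (2 * \<alpha>)) *\<^sub>R (Acov x ** transpose (Acov x) + mat 1)"
  unfolding SigmaH_def noise_var_def alpha_eq by (simp add: Let_def)

text \<open>Every contribution to the log-ratio other than the one in \<open>xprev\<close> is bounded by a
  multiple of this quantity.\<close>

definition weight :: "real^'n \<Rightarrow> real" where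
  "weight x = real T powr (c0 + 2 * cR) * ((norm x)^2 + 1)"

lemma weight_ge_1: "1 \<le> weight x"
proof -
  have "1 \<le> real T powr (c0 + 2 * cR)"
    using T_ge_2 c0_ge_1 cR_pos by (intro ge_one_powr_ge_zero) auto
  moreover have "1 \<le> (norm x)^2 + 1" by simp
  ultimately show ?thesis unfolding weight_def using mult_mono[of 1 _ 1] by force
qed

lemma inverse_noise_var_le: "1 / \<sigma> \<le> real T powr c0"
proof -
  have "1 / \<sigma> \<le> 1 / real T powr (- c0)"
    using step_bounds(5) T_powr_neg_c0(1) Xt.s_pos by (intro divide_left_mono) auto
  then show ?thesis by (simp add: powr_minus_divide)
qed

lemma sq_norm_plus_R_div_noise_var_le: "(norm x + R)^2 / \<sigma> \<le> 2 * weight x"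
proof -
  have "(norm x + R)^2 \<le> 2 * ((norm x)^2 + R^2)"
    using sum_squares_bound[of "norm x" R] by (simp add: power2_sum algebra_simps)
  also have "\<dots> \<le> 2 * (R^2 * ((norm x)^2 + 1))"
    using R_ge_1 mult_right_mono[of 1 "R^2" "(norm x)^2"] by (simp add: algebra_simps one_le_power)
  finally have "(norm x + R)^2 * (1 / \<sigma>) \<le> 2 * (R^2 * ((norm x)^2 + 1)) * real T powr c0"
    using inverse_noise_var_le Xt.s_pos by (intro mult_mono) auto
  also have "\<dots> = 2 * weight x"
  proof -
    have "real T powr (c0 + 2 * cR) = R^2 * real T powr c0"
      using T_ge_2 by (simp add: powr_power powr_add)
    then show ?thesis unfolding weight_def by (simp only: mult_ac)
  qed
  finally show ?thesis by simp
qed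

lemma ln_mix_prev_le: "ln (Xs.mix xprev) \<le> real CARD('n) / 2 * c0 * ln (real T)"
proof -
  have "ln (Xs.mix xprev) \<le> ln (gauss_const CARD('n) \<sigma>')"
    using Xs.mix_le Xs.mix_pos by (intro ln_mono)
  also have "\<dots> \<le> real CARD('n) / 2 * (- ln \<sigma>')"
    using ln_gauss_const_le[OF Xs.s_pos] by simp
  also have "\<dots> \<le> real CARD('n) / 2 * (c0 * ln (real T))"
    using minus_ln_le_of_powr_le step_bounds(7) T_ge_2 by (intro mult_left_mono) auto
  finally show ?thesis by simp
qed

lemma ln_transition_le:
  fixes xprev xt :: "real^'n"
  shows "ln (gauss_pdf (sqrt \<alpha> *\<^sub>R xprev) (\<beta> *\<^sub>R mat 1) xt) \<le> real CARD('n) / 2 * (c0 + 1) * ln (real T)"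
proof -
  have "ln (gauss_pdf (sqrt \<alpha> *\<^sub>R xprev) (\<beta> *\<^sub>R mat 1) xt) \<le> real CARD('n) / 2 * (- ln \<beta>)"
    using ln_gauss_pdf_scaleR_mat_1_le[OF step_bounds(1), of "sqrt \<alpha> *\<^sub>R xprev" xt] by simp
  also have "\<dots> \<le> real CARD('n) / 2 * ((c0 + 1) * ln (real T))"
    using minus_ln_le_of_powr_le step_bounds(3) T_ge_2 by (intro mult_left_mono) auto
  finally show ?thesis by simp
qed

lemma minus_ln_mix_le: "- ln (Xt.mix xt) \<le> real CARD('n) / 2 * ln (2 * pi) + weight xt"
proof -
  let ?K = "gauss_const CARD('n) \<sigma>"
  have "ln (?K * exp (- ((norm xt + R)^2) / (2 * \<sigma>))) \<le> ln (Xt.mix xt)"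
    using Xt.mix_lower_bound Xt.K_pos by (intro ln_mono) auto
  then have "ln ?K - (norm xt + R)^2 / (2 * \<sigma>) \<le> ln (Xt.mix xt)"
    using Xt.K_pos by (simp add: ln_mult)
  moreover have "ln ?K = - (real CARD('n) / 2) * ln (2 * pi) - (real CARD('n) / 2) * ln \<sigma>"
    by (rule ln_gauss_const[OF Xt.s_pos])
  moreover have "real CARD('n) / 2 * ln \<sigma> \<le> 0"
    using Xt.s_pos step_bounds(6) by (intro mult_nonneg_nonpos) auto
  moreover have "(norm xt + R)^2 / (2 * \<sigma>) \<le> weight xt"
    using sq_norm_plus_R_div_noise_var_le[of xt] by simp
  ultimately show ?thesis by linarith
qed

lemma alpha_bounds: "1/2 \<le> \<alpha>" "\<alpha> \<le> 1"
  using alpha_eq step_bounds(1,2) by auto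

lemma alpha_div_beta_le: "\<alpha> / \<beta> \<le> real T powr (c0 + 1)"
proof -
  have "\<alpha> / \<beta> \<le> 1 / real T powr (- (c0 + 1))"
    using alpha_bounds step_bounds(1,3) T_ge_2 by (intro frac_le) auto
  also have "\<dots> = real T powr (c0 + 1)"
    by (subst powr_minus_divide) simp
  finally show ?thesis .
qed

lemma beta_mult_sq_norm_score_le: "\<beta> * (norm (Xt.mix_score x))^2 \<le> 2 * (real CARD('n))^2 * weight x"
proof -
  have "(norm (Xt.mix_score x))^2 \<le> (real CARD('n) * ((norm x + R) / \<sigma>))^2"
    using Xt.norm_mix_score_le by (simp add: power_mono)
  then have "\<beta> * (norm (Xt.mix_score x))^2 \<le> \<sigma> * ((real CARD('n))^2 * (norm x + R)^2 / \<sigma>^2)"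
    using step_bounds(1,4) by (intro mult_mono) (auto simp: power_mult_distrib power_divide)
  also have "\<dots> = (real CARD('n))^2 * ((norm x + R)^2 / \<sigma>)"
    using Xt.s_pos by (simp add: power2_eq_square)
  also have "\<dots> \<le> (real CARD('n))^2 * (2 * weight x)"
    by (intro mult_left_mono sq_norm_plus_R_div_noise_var_le) simp
  finally show ?thesis by simp
qed

lemma sq_norm_diff_muhat_le:
  fixes xprev xt :: "real^'n"
  shows "(norm (xprev - muhat T c0 c1 M t xt))^2
     \<le> 2 * (norm (xprev - (1 / sqrt \<alpha>) *\<^sub>R xt))^2 + 2 * (\<beta>^2 / \<alpha>) * (norm (Xt.mix_score xt))^2"
proof -
  let ?w = "xprev - (1 / sqrt \<alpha>) *\<^sub>R xt" and ?sc = "Xt.mix_score xt"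
  have "xprev - muhat T c0 c1 M t xt = ?w - (\<beta> / sqrt \<alpha>) *\<^sub>R ?sc"
    unfolding muhat_eq by (simp add: algebra_simps scaleR_add_right)
  then have "norm (xprev - muhat T c0 c1 M t xt) \<le> norm ?w + norm ((\<beta> / sqrt \<alpha>) *\<^sub>R ?sc)"
    by (simp only: norm_triangle_ineq4)
  also have "norm ((\<beta> / sqrt \<alpha>) *\<^sub>R ?sc) = (\<beta> / sqrt \<alpha>) * norm ?sc"
    using step_bounds(1) alpha_bounds by (simp only: norm_scaleR abs_of_nonneg) simp
  finally have "(norm (xprev - muhat T c0 c1 M t xt))^2 \<le> (norm ?w + (\<beta> / sqrt \<alpha>) * norm ?sc)^2"
    by (simp add: power_mono)
  also have "\<dots> \<le> 2 * (norm ?w)^2 + 2 * ((\<beta> / sqrt \<alpha>) * norm ?sc)^2"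
    using sum_squares_bound[of "norm ?w" "(\<beta> / sqrt \<alpha>) * norm ?sc"]
    by (simp add: power2_sum algebra_simps)
  also have "((\<beta> / sqrt \<alpha>) * norm ?sc)^2 = (\<beta>^2 / \<alpha>) * (norm ?sc)^2"
    using alpha_bounds by (simp add: power_mult_distrib power_divide)
  finally show ?thesis by simp
qed

lemma quadratic_form_SigmaH_le:
  fixes xprev xt :: "real^'n"
  defines "v \<equiv> xprev - muhat T c0 c1 M t xt"
  shows "v \<bullet> (matrix_inv (SigmaH T c0 c1 M t xt) *v v)
     \<le> 4 * real T powr (c0 + 1) * (norm (xprev - (1 / sqrt \<alpha>) *\<^sub>R xt))^2
       + 8 * (real CARD('n))^2 * weight xt"
proof -
  let ?W = "(norm (xprev - (1 / sqrt \<alpha>) *\<^sub>R xt))^2" and ?sc = "Xt.mix_score xt"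
  have k: "0 < \<beta> / (2 * \<alpha>)" using step_bounds(1) alpha_bounds by simp
  have "v \<bullet> (matrix_inv (SigmaH T c0 c1 M t xt) *v v) \<le> (2 * \<alpha> / \<beta>) * (norm v)^2"
    using quadratic_form_inv_scaled_gram_plus_id_le[OF k] unfolding SigmaH_eq by (simp add: mult.commute)
  also have "\<dots> \<le> (2 * \<alpha> / \<beta>) * (2 * ?W + 2 * (\<beta>^2 / \<alpha>) * (norm ?sc)^2)"
    using step_bounds(1) alpha_bounds sq_norm_diff_muhat_le unfolding v_def
    by (intro mult_left_mono) auto
  also have "\<dots> = 4 * (\<alpha> / \<beta>) * ?W + 4 * (\<beta> * (norm ?sc)^2)"
    using step_bounds(1) alpha_bounds by (simp add: field_simps power2_eq_square)
  also have "\<dots> \<le> 4 * real T powr (c0 + 1) * ?W + 4 * (2 * (real CARD('n))^2 * weight xt)"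
    using alpha_div_beta_le beta_mult_sq_norm_score_le by (intro add_mono mult_left_mono mult_right_mono) auto
  finally show ?thesis by simp
qed

lemma det_SigmaH_nonzero: "det (SigmaH T c0 c1 M t x) \<noteq> 0"
  unfolding SigmaH_eq using step_bounds(1) alpha_bounds
  by (intro invertible_det_nz[THEN iffD1] invertible_scaled_gram_plus_id) auto

lemma abs_Acov_nth_le: "\<bar>Acov x $ i $ j\<bar> \<le> 6 * weight x"
proof -
  have "\<bar>Acov x $ i $ j\<bar> \<le> \<bar>(mat 1 :: real^'n^'n) $ i $ j\<bar> + (\<beta> / \<sigma>) * \<bar>Jac T c0 c1 M t x $ i $ j\<bar>"
    using abs_triangle_ineq4[of "(mat 1 :: real^'n^'n) $ i $ j" "(\<beta> / \<sigma>) * Jac T c0 c1 M t x $ i $ j"]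
      step_bounds(1) Xt.s_pos by (simp add: abs_mult)
  also have "\<dots> \<le> 1 + 1 * (2 * (norm x + R)^2 / \<sigma> + 1)"
    using step_bounds(1,4) Xt.s_pos abs_Jac_nth_le[of x i j]
    by (intro add_mono mult_mono) (auto simp: mat_def)
  also have "\<dots> \<le> 6 * weight x"
    using sq_norm_plus_R_div_noise_var_le[of x] weight_ge_1[of x] by simp
  finally show ?thesis .
qed

lemma abs_SigmaH_nth_le: "\<bar>SigmaH T c0 c1 M t x $ i $ j\<bar> \<le> (36 * real CARD('n) + 1) * (weight x)^2"
proof -
  have "\<bar>SigmaH T c0 c1 M t x $ i $ j\<bar> \<le> (\<beta> / (2 * \<alpha>)) * (real CARD('n) * (6 * weight x)^2 + 1)"
    unfolding SigmaH_eq using step_bounds(1) alpha_bounds abs_Acov_nth_le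
    by (intro abs_scaled_gram_plus_id_nth_le) auto
  also have "\<dots> \<le> 1 * (real CARD('n) * (6 * weight x)^2 + 1)"
    using step_bounds(1,2) alpha_bounds by (intro mult_right_mono) auto
  also have "\<dots> \<le> (36 * real CARD('n) + 1) * (weight x)^2"
    using weight_ge_1[of x] one_le_power[of "weight x" 2] by (simp add: algebra_simps power_mult_distrib)
  finally show ?thesis .
qed

lemma ln_det_SigmaH_le:
  "ln (det (SigmaH T c0 c1 M t xt)) \<le> ln (fact CARD('n)) + real CARD('n) * ln (36 * real CARD('n) + 1)
     + 2 * real CARD('n) * weight xt"
proof -
  let ?w = "weight xt"
  have "\<bar>det (SigmaH T c0 c1 M t xt)\<bar> \<le> fact CARD('n) * ((36 * real CARD('n) + 1) * ?w^2) ^ CARD('n)"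
    using abs_SigmaH_nth_le by (rule abs_det_le_entrywise)
  then have "ln \<bar>det (SigmaH T c0 c1 M t xt)\<bar> \<le> ln (fact CARD('n) * ((36 * real CARD('n) + 1) * ?w^2) ^ CARD('n))"
    using det_SigmaH_nonzero[of xt] by (intro ln_mono) auto
  also have "\<dots> = ln (fact CARD('n)) + real CARD('n) * (ln (36 * real CARD('n) + 1) + 2 * ln ?w)"
    using weight_ge_1[of xt] by (simp add: ln_mult ln_realpow)
  also have "\<dots> \<le> ln (fact CARD('n)) + real CARD('n) * (ln (36 * real CARD('n) + 1) + 2 * ?w)"
    using ln_le_minus_one[of ?w] weight_ge_1[of xt] by (intro add_left_mono mult_left_mono) auto
  finally show ?thesis by (simp add: ln_abs_real algebra_simps)
qed

lemma condH_pos_ln: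
  fixes xprev xt :: "real^'n"
  defines "v \<equiv> xprev - muhat T c0 c1 M t xt"
  shows "0 < condH T c0 c1 M t xprev xt"
    and "ln (condH T c0 c1 M t xprev xt) = - (real CARD('n) / 2 * ln (2 * pi)
           + ln (det (SigmaH T c0 c1 M t xt)) / 2 + v \<bullet> (matrix_inv (SigmaH T c0 c1 M t xt) *v v) / 2)"
  using det_SigmaH_nonzero[of xt]
  by (auto simp: condH_def gauss_pdf_def v_def ln_mult)

lemma condX_pos_ln:
  fixes xprev xt :: "real^'n"
  shows "0 < condX T c0 c1 M t xprev xt"
    and "ln (condX T c0 c1 M t xprev xt) = ln (Xs.mix xprev)
           + ln (gauss_pdf (sqrt \<alpha> *\<^sub>R xprev) (\<beta> *\<^sub>R mat 1) xt) - ln (Xt.mix xt)"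
proof -
  have q: "0 < gauss_pdf (sqrt \<alpha> *\<^sub>R xprev) (\<beta> *\<^sub>R mat 1) xt"
    using step_bounds(1) by (simp add: gauss_pdf_scaleR_mat_1 gauss_const_pos)
  show "0 < condX T c0 c1 M t xprev xt"
    unfolding condX_eq by (intro divide_pos_pos mult_pos_pos Xs.mix_pos Xt.mix_pos q)
  show "ln (condX T c0 c1 M t xprev xt) = ln (Xs.mix xprev)
           + ln (gauss_pdf (sqrt \<alpha> *\<^sub>R xprev) (\<beta> *\<^sub>R mat 1) xt) - ln (Xt.mix xt)"
    unfolding condX_eq ln_divide_pos[OF mult_pos_pos[OF Xs.mix_pos q] Xt.mix_pos]
      ln_mult_pos[OF Xs.mix_pos q] ..
qed

lemma ln_condX_div_condH_le:
  fixes xprev xt :: "real^'n"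
  shows "ln (condX T c0 c1 M t xprev xt / condH T c0 c1 M t xprev xt)
     \<le> ratio_const CARD('n) + real CARD('n) * (2 * c0 + 1) / 2 * ln (real T)
       + (1 + real CARD('n) + 4 * (real CARD('n))^2) * weight xt
       + 2 * real T powr (c0 + 1) * (norm (xprev - (1 / sqrt \<alpha>) *\<^sub>R xt))^2"
proof -
  let ?d = "real CARD('n)" and ?L = "ln (real T)" and ?w = "weight xt"
    and ?W = "(norm (xprev - (1 / sqrt \<alpha>) *\<^sub>R xt))^2"
  have sum_of_bounds: "a + b - c - - (S + e / 2 + q / 2) \<le> X + Y + (S + Z) + S + U / 2 + V / 2"
    if "a \<le> X" "b \<le> Y" "- c \<le> S + Z" "e \<le> U" "q \<le> V" for a b c e q S X Y Z U V :: real
    using that by linarith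
  have "ln (condX T c0 c1 M t xprev xt / condH T c0 c1 M t xprev xt)
      = ln (condX T c0 c1 M t xprev xt) - ln (condH T c0 c1 M t xprev xt)"
    using condX_pos_ln(1) condH_pos_ln(1) by (rule ln_divide_pos)
  also have "\<dots> \<le> ?d / 2 * c0 * ?L + ?d / 2 * (c0 + 1) * ?L + (?d / 2 * ln (2 * pi) + ?w)
      + ?d / 2 * ln (2 * pi) + (ln (fact CARD('n)) + ?d * ln (36 * ?d + 1) + 2 * ?d * ?w) / 2
      + (4 * real T powr (c0 + 1) * ?W + 8 * ?d^2 * ?w) / 2"
    unfolding condX_pos_ln(2) condH_pos_ln(2)
    using ln_mix_prev_le[of xprev] ln_transition_le[of xprev xt] minus_ln_mix_le[of xt]
      ln_det_SigmaH_le[of xt] quadratic_form_SigmaH_le[of xprev xt]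
    by (rule sum_of_bounds)
  also have "\<dots> = ratio_const CARD('n) + ?d * (2 * c0 + 1) / 2 * ?L + (1 + ?d + 4 * ?d^2) * ?w
      + 2 * real T powr (c0 + 1) * ?W"
    by (simp add: ratio_const_def field_simps)
  finally show ?thesis .
qed

lemma two_T_powr_le: "2 * real T powr (c0 + 1) \<le> real T powr (c0 + 2 * cR + 2)"
proof -
  have T: "2 \<le> real T" using T_ge_2 by simp
  then have "2 * real T powr (c0 + 1) \<le> real T powr (c0 + 1) * real T"
    by (simp add: mult.commute)
  also have "\<dots> \<le> real T powr (c0 + 1) * real T * real T powr (2 * cR)"
    using mult_left_mono[OF ge_one_powr_ge_zero[of "real T" "2 * cR"], of "real T powr (c0 + 1) * real T"]
      T cR_pos by simp
  also have "\<dots> = real T powr (c0 + 2 * cR + 2)"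
    using T by (simp add: powr_add powr_numeral power2_eq_square mult_ac)
  finally show ?thesis .
qed

lemma ln_condX_div_condH_le_poly:
  fixes xprev xt :: "real^'n"
  assumes large: "ratio_const CARD('n) + real CARD('n) * (2 * c0 + 1) / 2
      + (1 + real CARD('n) + 4 * (real CARD('n))^2) \<le> real T"
  shows "ln (condX T c0 c1 M t xprev xt / condH T c0 c1 M t xprev xt)
     \<le> real T powr (c0 + 2 * cR + 2)
       * ((norm (xprev - (1 / sqrt \<alpha>) *\<^sub>R xt))^2 + (norm xt)^2 + 1)"
proof -
  let ?W = "(norm (xprev - (1 / sqrt \<alpha>) *\<^sub>R xt))^2" and ?w = "weight xt"
  let ?C = "ratio_const CARD('n)" and ?c = "real CARD('n) * (2 * c0 + 1) / 2"
    and ?D = "1 + real CARD('n) + 4 * (real CARD('n))^2"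
  have c: "0 \<le> ?c" using c0_ge_1 by simp
  have "?c * ln (real T) \<le> ?c * real T"
    using ln_le_minus_one[of "real T"] T_ge_2 by (intro mult_left_mono[OF _ c]) auto
  moreover have "?C + ?c * real T + ?D \<le> (real T)^2"
    using ratio_const_nonneg T_ge_2 large by (intro add_mult_add_le_square) auto
  moreover have "?C \<le> ?C * ?w"
    using mult_left_mono[OF weight_ge_1 ratio_const_nonneg] by simp
  moreover have "?c * real T \<le> ?c * real T * ?w"
    using mult_left_mono[OF weight_ge_1[of xt], of "?c * real T"] c by simp
  ultimately have "?C + ?c * ln (real T) + ?D * ?w \<le> (?C + ?c * real T + ?D) * ?w"
    unfolding distrib_right by linarith
  also have "\<dots> \<le> (real T)^2 * ?w"
    using \<open>?C + ?c * real T + ?D \<le> (real T)^2\<close> weight_ge_1[of xt] by (intro mult_right_mono) auto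
  moreover have "2 * real T powr (c0 + 1) * ?W \<le> real T powr (c0 + 2 * cR + 2) * ?W"
    using two_T_powr_le by (intro mult_right_mono) auto
  moreover have "real T powr (c0 + 2 * cR + 2) * (?W + (norm xt)^2 + 1)
      = real T powr (c0 + 2 * cR + 2) * ?W + (real T)^2 * ?w"
    using T_ge_2 by (simp add: weight_def powr_add powr_numeral algebra_simps)
  ultimately show ?thesis using ln_condX_div_condH_le[of xprev xt] by linarith
qed

end

lemma lr_regime_large_T:
  fixes c0 c1 :: real and T :: nat
  assumes "1 \<le> c0" "1 \<le> c1" "3 \<le> real T" "16 * c1^2 \<le> real T"
  shows "lr_regime T c0 c1"
proof
  have "exp 1 \<le> real T" using exp_le assms(3) by linarith
  then have lnT: "1 \<le> ln (real T)" using ln_exp ln_mono by fastforce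
  then show "1 \<le> c1 * ln (real T)" using assms(2) by (metis mult_mono mult.right_neutral zero_le_one order_trans)
  have T: "0 < real T" using assms(3) by simp
  have "ln (real T) = 2 * ln (sqrt (real T))" using T by (simp add: ln_sqrt)
  also have "\<dots> \<le> 2 * sqrt (real T)" using ln_le_minus_one[of "sqrt (real T)"] T by simp
  finally have l: "ln (real T) \<le> 2 * sqrt (real T)" .
  have "(4 * c1)^2 \<le> real T" using assms(4) by (simp add: power_mult_distrib)
  then have c1: "4 * c1 \<le> sqrt (real T)" by (rule real_le_rsqrt)
  have "c1 * ln (real T) \<le> (sqrt (real T) / 4) * (2 * sqrt (real T))"
    using l c1 assms(2) lnT by (intro mult_mono) auto
  also have "\<dots> = real T / 2" using T by (simp add: power2_eq_square[symmetric])
  finally show "c1 * ln (real T) / real T \<le> 1/2" using T by (simp add: divide_simps)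
qed (use assms in auto)

definition large_T_threshold :: "nat \<Rightarrow> real \<Rightarrow> real \<Rightarrow> real" where
  "large_T_threshold d c0 c1 = max 3 (max (16 * c1^2)
     (ratio_const d + real d * (2 * c0 + 1) / 2 + (1 + real d + 4 * (real d)^2)))"

lemma ln_condX_div_condH_le_of_large_T:
  fixes M :: "(real^'n) measure" and xprev xt :: "real^'n"
  assumes "0 < cR" "1 \<le> c0" "1 \<le> c1" and T: "large_T_threshold CARD('n) c0 c1 \<le> real T"
    and "prob_space M" "sets M = sets borel" "AE y in M. norm y \<le> real T powr cR" "2 \<le> t"
  shows "ln (condX T c0 c1 M t xprev xt / condH T c0 c1 M t xprev xt)
     \<le> real T powr (c0 + 2 * cR + 2)
       * ((norm (xprev - (1 / sqrt (lr_alpha T c0 c1 t)) *\<^sub>R xt))^2 + (norm xt)^2 + 1)"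
proof -
  have "3 \<le> real T" "16 * c1^2 \<le> real T"
    and large: "ratio_const CARD('n) + real CARD('n) * (2 * c0 + 1) / 2
      + (1 + real CARD('n) + 4 * (real CARD('n))^2) \<le> real T"
    using T unfolding large_T_threshold_def by simp_all
  then interpret diffusion_step T c0 c1 M cR t
    using assms lr_regime_large_T[of c0 c1 T]
    by (intro diffusion_step.intro diffusion_step_axioms.intro) simp_all
  show ?thesis using large by (rule ln_condX_div_condH_le_poly)
qed

theorem lemma13:
  fixes cR :: real
  assumes "cR > 0"
  shows "\<exists>C0 C1. \<forall>c0\<ge>C0. \<forall>c1\<ge>C1. \<exists>T0::nat. \<forall>T\<ge>T0. \<forall>M :: (real^'n) measure.
           (prob_space M \<and> sets M = sets borel \<and> absolutely_continuous lborel M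
            \<and> (AE y in M. norm y \<le> real T powr cR)) \<longrightarrow>
           (\<forall>t. 2 \<le> t \<and> t \<le> T \<longrightarrow>
              (\<forall>xt xprev :: real^'n.
                 ln (condX T c0 c1 M t xprev xt / condH T c0 c1 M t xprev xt)
                 \<le> real T powr (c0 + 2 * cR + 2)
                   * ((norm (xprev - (1 / sqrt (lr_alpha T c0 c1 t)) *\<^sub>R xt))\<^sup>2
                      + (norm xt)\<^sup>2 + 1)))"
  apply (intro exI[of _ "1::real"] allI impI)
  subgoal for c0 c1
    apply (intro exI[of _ "nat \<lceil>large_T_threshold CARD('n) c0 c1\<rceil>"] allI impI)
    by (elim conjE, rule ln_condX_div_condH_le_of_large_T[OF assms]) (simp_all add: nat_ceiling_le_eq)
  done

end
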